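(* Let $\phi$ be an instance of NAE-3SAT with boolean variables $x_1,\dots,x_n$ and clauses $C_1,\dots,C_m$, each clause consisting of three literals, and let $G$ be the bus graph constructed from $\phi$ as follows (all gadgets being vertex-disjoint): (1) for each variable $x_i$, an $(X_i,t_i,\overline{X}_i,f_i)$-variable-box, where $t_i$ and $f_i$ are the numbers of occurrences of the literals $x_i$ and $\overline{x_i}$ in $\phi$; (2) for each clause $C_q=(\ell_1\lor\ell_2\lor\ell_3)$: a $\mathcal{C}$-vertex $c_q$; an $(I_{q,1},O_{q,1})$-chain, an $(I_{q,2},O_{q,2})$-chain and an $(I_{q,3},O_{q,3})$-chain; edges $(O_{q,s},c_q)$ for $s=1,2,3$; and edges $(I_{q,s},p_s)$ for $s=1,2,3$, where, if $\ell_s$ is the $r$-th occurrence of the literal $x_i$ then $p_s=o^r_{X_i}$, and if $\ell_s$ is the $r$-th occurrence of the literal $\overline{x_i}$ then $p_s=o^r_{\overline{X}_i}$. Then $\phi$ is a yes-instance of NAE-3SAT (i.e. has a truth assignment under which every clause has at least one true and at least one false literal) if and only if $G$ is realizable.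
   Context: A bus graph is a finite bipartite graph $G=(\mathcal{B},\mathcal{C};\mathcal{E})$ with $\deg(c)\le 4$ for all $c\in\mathcal{C}$. A realization $\Gamma$ of $G$ in the integer grid is a drawing such that: (1) each $B\in\mathcal{B}$ is drawn as a closed line segment $\Gamma(B)$ along a grid line (a "bus"); (2) each $c\in\mathcal{C}$ is drawn as a grid point $\Gamma(c)$; (3) each edge $(B,c)\in\mathcal{E}$ is drawn as a closed line segment along a grid line between a point of $\Gamma(B)$ and $\Gamma(c)$, perpendicular to $\Gamma(B)$, containing no connectors or buses other than $\Gamma(B)$ and $\Gamma(c)$ (an edge may meet the bus at its endpoint; edges may cross other edges); (4) no two buses or connectors intersect. $G$ is realizable if it has a realization. An $(A,B)$-perp consists of three distinct $\mathcal{C}$-vertices $x,y,z$, five distinct $\mathcal{B}$-vertices $A,A',B,B',C$, and the twelve edges $(A,x),(A',x),(B,x),(B',x)$, $(A,y),(A',y),(B,y),(C,y)$, $(A,z),(A',z),(B',z),(C,z)$. A $(B,o)$-flipper consists of an $(A,B)$-perp (for a fresh $A$) plus a $\mathcal{C}$-vertex $o$ and edges $(B,o),(B',o)$. An $(I,O)$-chain consists of vertex-disjoint copies of an $(I,o_1)$-flipper, an $(I_1,o_2)$-flipper, an $(I_2,o_3)$-flipper and an $(I_3,O)$-perp, together with edges $(I_1,o_1),(I_2,o_2),(I_3,o_3)$. An $(A,k,B,l)$-variable-box consists of an $(A,B)$-perp together with additional $\mathcal{C}$-vertices $x_A,y_A,z_A,o^1_A,\dots,o^k_A,x_B,y_B,z_B,o^1_B,\dots,o^l_B$,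 additional $\mathcal{B}$-vertices $R_A,S_A,T_A,U_A,R_B,S_B,T_B,U_B$, and additional edges $(A,x_A),(R_A,x_A),(S_A,x_A),(U_A,x_A)$, $(A,y_A),(R_A,y_A),(T_A,y_A),(U_A,y_A)$, $(A,z_A),(S_A,z_A),(T_A,z_A),(U_A,z_A)$, $(R_A,o^i_A),(S_A,o^i_A)$ for $i=1,\dots,k$, and the analogous edges with $A$ replaced by $B$ (and $o^j_B$, $j=1,\dots,l$). *)

theory Defs
  imports "HOL-Analysis.Analysis"
begin

definition bus_graph :: "'b set \<Rightarrow> 'c set \<Rightarrow> ('b \<times> 'c) set \<Rightarrow> bool" where
  "bus_graph Bs Cs E \<longleftrightarrow> finite Bs \<and> finite Cs \<and> E \<subseteq> Bs \<times> Cs \<and>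
     (\<forall>c\<in>Cs. card {B. (B, c) \<in> E} \<le> 4)"

definition grid_point :: "real \<times> real \<Rightarrow> bool" where
  "grid_point p \<longleftrightarrow> fst p \<in> \<int> \<and> snd p \<in> \<int>"

text \<open>The flag is
only relevant for degenerate (one-point) buses, where it fixes which direction
counts as perpendicular.\<close>

definition bus_ok :: "bool \<Rightarrow> (real \<times> real) \<times> (real \<times> real) \<Rightarrow> bool" where
  "bus_ok h pq \<longleftrightarrow>
     (if h then snd (fst pq) = snd (snd pq) \<and> snd (fst pq) \<in> \<int>
           else fst (fst pq) = fst (snd pq) \<and> fst (fst pq) \<in> \<int>)"

definition seg :: "(real \<times> real) \<times> (real \<times> real) \<Rightarrow> (real \<times> real) set" where
  "seg pq = closed_segment (fst pq) (snd pq)"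

definition bus_realization ::
  "'b set \<Rightarrow> 'c set \<Rightarrow> ('b \<times> 'c) set \<Rightarrow> ('b \<Rightarrow> bool)
   \<Rightarrow> ('b \<Rightarrow> (real \<times> real) \<times> (real \<times> real)) \<Rightarrow> ('c \<Rightarrow> real \<times> real) \<Rightarrow> bool" where
  "bus_realization Bs Cs E hor bus pt \<longleftrightarrow>
     (\<forall>B\<in>Bs. bus_ok (hor B) (bus B)) \<and>
     (\<forall>c\<in>Cs. grid_point (pt c)) \<and>
     (\<forall>(B, c)\<in>E. \<exists>u\<in>seg (bus B).
        (if hor B then fst u = fst (pt c) else snd u = snd (pt c)) \<and>
        (\<forall>B'\<in>Bs. B' \<noteq> B \<longrightarrow> closed_segment u (pt c) \<inter> seg (bus B') = {}) \<and>
        (\<forall>c'\<in>Cs. c' \<noteq> c \<longrightarrow> pt c' \<notin> closed_segment u (pt c))) \<and>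
     (\<forall>B\<in>Bs. \<forall>B'\<in>Bs. B \<noteq> B' \<longrightarrow> seg (bus B) \<inter> seg (bus B') = {}) \<and>
     (\<forall>c\<in>Cs. \<forall>c'\<in>Cs. c \<noteq> c' \<longrightarrow> pt c \<noteq> pt c') \<and>
     (\<forall>B\<in>Bs. \<forall>c\<in>Cs. pt c \<notin> seg (bus B))"

definition realizable :: "'b set \<Rightarrow> 'c set \<Rightarrow> ('b \<times> 'c) set \<Rightarrow> bool" where
  "realizable Bs Cs E \<longleftrightarrow> (\<exists>hor bus pt. bus_realization Bs Cs E hor bus pt)"

datatype perpB = PA | PA' | PB | PB' | PC
datatype perpC = Px | Py | Pz

definition perp_edges :: "(perpB \<times> perpC) set" where
  "perp_edges = {(PA,Px),(PA',Px),(PB,Px),(PB',Px),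
                 (PA,Py),(PA',Py),(PB,Py),(PC,Py),
                 (PA,Pz),(PA',Pz),(PB',Pz),(PC,Pz)}"

text \<open>Variable box.  Side True is the A-side, side False the B-side of the
(A,k,B,l)-variable-box; VP r is the perp vertex with role r.\<close>
datatype vbB = VP perpB | VR bool | VS bool | VT bool | VU bool
datatype vbC = VPc perpC | Vx bool | Vy bool | Vz bool | Vo bool nat

definition vbox_base :: "bool \<Rightarrow> vbB" where
  "vbox_base s = (if s then VP PA else VP PB)"

definition vbox_edges :: "nat \<Rightarrow> nat \<Rightarrow> (vbB \<times> vbC) set" where
  "vbox_edges k l =
     map_prod VP VPc ` perp_edges \<union>
     (\<Union>s\<in>UNIV. {(vbox_base s, Vx s), (VR s, Vx s), (VS s, Vx s), (VU s, Vx s),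
                 (vbox_base s, Vy s), (VR s, Vy s), (VT s, Vy s), (VU s, Vy s),
                 (vbox_base s, Vz s), (VS s, Vz s), (VT s, Vz s), (VU s, Vz s)}) \<union>
     {(VR True, Vo True i) | i. i \<in> {1..k}} \<union> {(VS True, Vo True i) | i. i \<in> {1..k}} \<union>
     {(VR False, Vo False j) | j. j \<in> {1..l}} \<union> {(VS False, Vo False j) | j. j \<in> {1..l}}"

text \<open>Stages j = 1,2,3 are the flippers, stage 4 the final perp;
CB j r is the vertex with role r in the perp of stage j (so for j \<le> 3 the fresh A
of the flipper is CB j PA and its input is CB j PB), Co j is o_j.
Thus I = CB 1 PB, I_1 = CB 2 PB, I_2 = CB 3 PB, I_3 = CB 4 PA, O = CB 4 PB.\<close>
datatype chB = CB nat perpB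
datatype chC = CC nat perpC | Co nat

definition chain_in :: "nat \<Rightarrow> chB" where
  "chain_in j = (if j = 4 then CB 4 PA else CB j PB)"

definition chain_edges :: "(chB \<times> chC) set" where
  "chain_edges =
     (\<Union>j\<in>{1..4}. map_prod (CB j) (CC j) ` perp_edges) \<union>
     (\<Union>j\<in>{1..3}. {(CB j PB, Co j), (CB j PB', Co j)}) \<union>
     (\<Union>j\<in>{1..3}. {(chain_in (Suc j), Co j)})"

text \<open>A literal is a pair (i, p): variable x_i, positive if p, negated otherwise.
An instance has variables 0..<n and a list of clauses (lists of literals).\<close>

definition lit_val :: "(nat \<Rightarrow> bool) \<Rightarrow> nat \<times> bool \<Rightarrow> bool" where
  "lit_val a l = (a (fst l) = snd l)"

definition nae_sat :: "(nat \<times> bool) list list \<Rightarrow> bool" where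
  "nae_sat cls \<longleftrightarrow> (\<exists>a. \<forall>C\<in>set cls. (\<exists>l\<in>set C. lit_val a l) \<and> (\<exists>l\<in>set C. \<not> lit_val a l))"

text \<open>Occurrences are counted in reading order (clause by clause, left to right).
occ_num cls q s is r such that literal s of clause q is the r-th occurrence of that
literal (counting from 1).\<close>

definition occ_num :: "(nat \<times> bool) list list \<Rightarrow> nat \<Rightarrow> nat \<Rightarrow> nat" where
  "occ_num cls q s = count_list (concat (take q cls) @ take s (cls ! q)) (cls ! q ! s) + 1"

definition occ_total :: "(nat \<times> bool) list list \<Rightarrow> nat \<times> bool \<Rightarrow> nat" where
  "occ_total cls l = count_list (concat cls) l"

datatype gB = VarB nat vbB | ChB nat nat chB
datatype gC = VarC nat vbC | ChC nat nat chC | ClC nat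

definition nae_bus_edges :: "nat \<Rightarrow> (nat \<times> bool) list list \<Rightarrow> (gB \<times> gC) set" where
  "nae_bus_edges n cls =
     (\<Union>i\<in>{..<n}. map_prod (VarB i) (VarC i) `
          vbox_edges (occ_total cls (i, True)) (occ_total cls (i, False))) \<union>
     (\<Union>q\<in>{..<length cls}. \<Union>s\<in>{..<3}.
        map_prod (ChB q s) (ChC q s) ` chain_edges \<union>
        {(ChB q s (CB 4 PB), ClC q),
         (ChB q s (CB 1 PB),
            VarC (fst (cls ! q ! s)) (Vo (snd (cls ! q ! s)) (occ_num cls q s)))})"

text \<open>Every vertex of the constructed graph is incident to an edge, so its vertex
classes are the projections of its edge set.\<close>
definition nae_bus_graph :: "nat \<Rightarrow> (nat \<times> bool) list list \<Rightarrow> gB set \<times> gC set \<times> (gB \<times> gC) set" where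
  "nae_bus_graph n cls =
     (let E = nae_bus_edges n cls in (fst ` E, snd ` E, E))"

end

theory Submission
  imports Defs
begin

(* Two parallel buses attached to the same connector must approach it from opposite sides, since
   otherwise the nearer attachment point lies on the other edge; so no three buses at a connector
   are parallel.  In a perp this forces A and A' to be perpendicular to B, B' and C.  Hence a
   flipper turns the orientation of its input, a chain of three flippers and a perp preserves it,
   and the input of the chain of a literal is parallel to bus A or bus B of its variable box,
   according to the sign of the literal.  Reading "X_i is horizontal" as "x_i is true", the output
   O_{q,s} is horizontal iff the literal is true, and the three outputs attached to c_q are not all
   parallel: the assignment is not-all-equal.

   Conversely, for a not-all-equal assignment the graph is drawn with explicit integer
   coordinates.  Every gadget is a transposed and translated copy of a fixed drawing, placed in
   its own frame; the frames are pairwise disjoint, so apart from checking the fixed drawings only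
   the few edges between frames have to be checked individually. *)

lemma occ_num_bounds:
  assumes "q < length cls" "s < length (cls ! q)"
  shows "1 \<le> occ_num cls q s \<and> occ_num cls q s \<le> occ_total cls (cls ! q ! s)"
proof -
  have "concat cls = concat (take q cls) @ cls ! q @ concat (drop (Suc q) cls)"
    using assms(1) by (metis concat.simps(2) concat_append id_take_nth_drop)
  also have "cls ! q = take s (cls ! q) @ cls ! q ! s # drop (Suc s) (cls ! q)"
    using assms(2) by (rule id_take_nth_drop)
  finally show ?thesis unfolding occ_num_def occ_total_def by simp
qed

lemma occ_prefix_extends:
  assumes q: "q < length cls" "q' < length cls" and s: "s < length (cls ! q)"
    and lex: "q < q' \<or> (q = q' \<and> s < s')"
  shows "\<exists>zs. concat (take q cls) @ take s (cls ! q) @ [cls ! q ! s] @ zs =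
    concat (take q' cls) @ take s' (cls ! q')"
proof (cases "q = q'")
  case True
  then have "s < s'" using lex by auto
  have "take s' (cls ! q) = take (Suc s + (s' - Suc s)) (cls ! q)" using \<open>s < s'\<close> by simp
  also have "\<dots> = take s (cls ! q) @ [cls ! q ! s] @ take (s' - Suc s) (drop (Suc s) (cls ! q))"
    unfolding take_add take_Suc_conv_app_nth[OF s] by simp
  finally show ?thesis using True by auto
next
  case False
  then have "q < q'" using lex by auto
  have "take q' cls = take (Suc q + (q' - Suc q)) cls" using \<open>q < q'\<close> by simp
  also have "\<dots> = take q cls @ [cls ! q] @ take (q' - Suc q) (drop (Suc q) cls)"
    unfolding take_add take_Suc_conv_app_nth[OF q(1)] by simp
  finally have "concat (take q' cls) = concat (take q cls) @ take s (cls ! q) @ [cls ! q ! s] @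
      drop (Suc s) (cls ! q) @ concat (take (q' - Suc q) (drop (Suc q) cls))"
    using id_take_nth_drop[OF s]
    by (metis append.assoc append_Cons append_Nil concat.simps(1,2) concat_append)
  then show ?thesis by auto
qed

lemma occ_num_less:
  assumes q: "q < length cls" "q' < length cls" and s: "s < length (cls ! q)"
    and lex: "q < q' \<or> (q = q' \<and> s < s')" and same: "cls ! q ! s = cls ! q' ! s'"
  shows "occ_num cls q s < occ_num cls q' s'"
proof -
  obtain zs where "concat (take q cls) @ take s (cls ! q) @ [cls ! q ! s] @ zs =
      concat (take q' cls) @ take s' (cls ! q')"
    using occ_prefix_extends[OF q s lex] by blast
  from arg_cong[OF this, of "\<lambda>xs. count_list xs (cls ! q ! s)"] show ?thesis
    unfolding occ_num_def same by simp
qed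

lemma occ_num_inj:
  assumes "q < length cls" "q' < length cls" "s < length (cls ! q)" "s' < length (cls ! q')"
    and "cls ! q ! s = cls ! q' ! s'" "(q, s) \<noteq> (q', s')"
  shows "occ_num cls q s \<noteq> occ_num cls q' s'"
proof -
  have "q < q' \<or> (q = q' \<and> s < s') \<or> q' < q \<or> (q' = q \<and> s' < s)" using assms(6) by auto
  then show ?thesis using occ_num_less assms(1-5) by (metis less_irrefl)
qed

lemma nae_bus_edgesI:
  shows nae_bus_edges_vbox: "i < n \<Longrightarrow> map_prod (VarB i) (VarC i) `
      vbox_edges (occ_total cls (i, True)) (occ_total cls (i, False)) \<subseteq> nae_bus_edges n cls"
    and nae_bus_edges_chain: "q < length cls \<Longrightarrow> s < 3 \<Longrightarrow>
      map_prod (ChB q s) (ChC q s) ` chain_edges \<subseteq> nae_bus_edges n cls"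
    and nae_bus_edges_clause: "q < length cls \<Longrightarrow> s < 3 \<Longrightarrow>
      (ChB q s (CB 4 PB), ClC q) \<in> nae_bus_edges n cls"
    and nae_bus_edges_literal: "q < length cls \<Longrightarrow> s < 3 \<Longrightarrow>
      (ChB q s (CB 1 PB), VarC (fst (cls ! q ! s)) (Vo (snd (cls ! q ! s)) (occ_num cls q s)))
        \<in> nae_bus_edges n cls"
  unfolding nae_bus_edges_def by blast+

lemma nae_bus_edgesE:
  assumes "(B, c) \<in> nae_bus_edges n cls"
  obtains (vbox) i b x where "i < n"
      "(b, x) \<in> vbox_edges (occ_total cls (i, True)) (occ_total cls (i, False))" "B = VarB i b" "c = VarC i x"
  | (chain) q s b x where "q < length cls" "s < 3" "(b, x) \<in> chain_edges" "B = ChB q s b" "c = ChC q s x"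
  | (clause) q s where "q < length cls" "s < 3" "B = ChB q s (CB 4 PB)" "c = ClC q"
  | (literal) q s where "q < length cls" "s < 3" "B = ChB q s (CB 1 PB)"
      "c = VarC (fst (cls ! q ! s)) (Vo (snd (cls ! q ! s)) (occ_num cls q s))"
  using assms unfolding nae_bus_edges_def by blast

section \<open>Orientations forced by a realization\<close>

lemma parallel_edges_opposite_sides:
  fixes u u' p :: "real \<times> real"
  assumes "u \<in> S" "u' \<in> S'" "closed_segment u p \<inter> S' = {}" "closed_segment u' p \<inter> S = {}"
    and "if h then fst u = fst p else snd u = snd p" "if h then fst u' = fst p else snd u' = snd p"
  shows "(if h then snd u < snd p else fst u < fst p) \<noteq> (if h then snd u' < snd p else fst u' < fst p)"
proof
  assume "(if h then snd u < snd p else fst u < fst p) = (if h then snd u' < snd p else fst u' < fst p)"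
  then have "u \<in> closed_segment u' p \<or> u' \<in> closed_segment u p"
    using assms(5,6)
    by (cases h) (auto simp: closed_segment_same_fst closed_segment_same_snd closed_segment_eq_real_ivl
        mem_Times_iff prod_eq_iff)
  then show False using assms(1-4) by blast
qed


lemma bus_realization_edgeE:
  assumes "bus_realization Bs Cs E hor bus pt" "(B, c) \<in> E"
  obtains u where "u \<in> seg (bus B)" "if hor B then fst u = fst (pt c) else snd u = snd (pt c)"
    "\<forall>B'\<in>Bs. B' \<noteq> B \<longrightarrow> closed_segment u (pt c) \<inter> seg (bus B') = {}"
  using assms unfolding bus_realization_def by fast

lemma bus_realization_three_not_parallel:
  assumes R: "bus_realization Bs Cs E hor bus pt" and "E \<subseteq> Bs \<times> Cs"
    and E: "(B1, c) \<in> E" "(B2, c) \<in> E" "(B3, c) \<in> E"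
    and distinct: "B1 \<noteq> B2" "B1 \<noteq> B3" "B2 \<noteq> B3"
  shows "\<not> (hor B1 = hor B2 \<and> hor B2 = hor B3)"
proof
  assume par: "hor B1 = hor B2 \<and> hor B2 = hor B3"
  have Bs: "B1 \<in> Bs" "B2 \<in> Bs" "B3 \<in> Bs" using E \<open>E \<subseteq> Bs \<times> Cs\<close> by auto
  obtain u1 where
    u1: "u1 \<in> seg (bus B1)" "if hor B1 then fst u1 = fst (pt c) else snd u1 = snd (pt c)"
      "\<forall>B'\<in>Bs. B' \<noteq> B1 \<longrightarrow> closed_segment u1 (pt c) \<inter> seg (bus B') = {}"
    using bus_realization_edgeE[OF R E(1)] .
  obtain u2 where
    u2: "u2 \<in> seg (bus B2)" "if hor B2 then fst u2 = fst (pt c) else snd u2 = snd (pt c)"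
      "\<forall>B'\<in>Bs. B' \<noteq> B2 \<longrightarrow> closed_segment u2 (pt c) \<inter> seg (bus B') = {}"
    using bus_realization_edgeE[OF R E(2)] .
  obtain u3 where
    u3: "u3 \<in> seg (bus B3)" "if hor B3 then fst u3 = fst (pt c) else snd u3 = snd (pt c)"
      "\<forall>B'\<in>Bs. B' \<noteq> B3 \<longrightarrow> closed_segment u3 (pt c) \<inter> seg (bus B') = {}"
    using bus_realization_edgeE[OF R E(3)] .
  have h2: "hor B2 = hor B1" and h3: "hor B3 = hor B1" using par by auto
  let ?side = "\<lambda>u. if hor B1 then snd u < snd (pt c) else fst u < fst (pt c)"
  have "?side u1 \<noteq> ?side u2"
    by (rule parallel_edges_opposite_sides[OF u1(1) u2(1) _ _ u1(2) u2(2)[unfolded h2]])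
      (use u1(3) u2(3) Bs distinct in auto)
  moreover have "?side u1 \<noteq> ?side u3"
    by (rule parallel_edges_opposite_sides[OF u1(1) u3(1) _ _ u1(2) u3(2)[unfolded h3]])
      (use u1(3) u3(3) Bs distinct in auto)
  moreover have "?side u2 \<noteq> ?side u3"
    by (rule parallel_edges_opposite_sides[OF u2(1) u3(1) _ _ u2(2)[unfolded h2] u3(2)[unfolded h3]])
      (use u2(3) u3(3) Bs distinct in auto)
  ultimately show False by blast
qed

lemma map_prod_image_subset_trans:
  "map_prod h k ` A \<subseteq> B \<Longrightarrow> map_prod f g ` B \<subseteq> E \<Longrightarrow> map_prod (f \<circ> h) (g \<circ> k) ` A \<subseteq> E"
  unfolding map_prod.comp[symmetric] image_comp[symmetric] by (meson image_mono order_trans)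

lemma perp_orientation:
  assumes R: "bus_realization Bs Cs E hor bus pt" and E: "E \<subseteq> Bs \<times> Cs"
    and perp: "map_prod fB fC ` perp_edges \<subseteq> E" and "inj fB"
  shows "hor (fB PA') = hor (fB PA) \<and> hor (fB PB) \<noteq> hor (fB PA) \<and>
         hor (fB PB') = hor (fB PB) \<and> hor (fB PC) = hor (fB PB)"
proof -
  have not_parallel: "\<not> (hor (fB r1) = hor (fB r2) \<and> hor (fB r2) = hor (fB r3))"
    if "(r1, x) \<in> perp_edges" "(r2, x) \<in> perp_edges" "(r3, x) \<in> perp_edges"
      "r1 \<noteq> r2" "r1 \<noteq> r3" "r2 \<noteq> r3" for r1 r2 r3 x
  proof (rule bus_realization_three_not_parallel[OF R E])
    show "(fB r1, fC x) \<in> E" "(fB r2, fC x) \<in> E" "(fB r3, fC x) \<in> E"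
      using perp that(1-3) by auto
    show "fB r1 \<noteq> fB r2" "fB r1 \<noteq> fB r3" "fB r2 \<noteq> fB r3"
      using \<open>inj fB\<close> that(4-6) by (auto dest: injD)
  qed
  show ?thesis
    using not_parallel[of PA Px PA' PB] not_parallel[of PA Px PA' PB'] not_parallel[of PA Px PB PB']
      not_parallel[of PA' Px PB PB'] not_parallel[of PA Py PA' PC] not_parallel[of PA Py PB PC]
      not_parallel[of PA' Py PB PC] not_parallel[of PA Pz PB' PC] not_parallel[of PA' Pz PB' PC]
    by (auto simp: perp_edges_def)
qed

lemma chain_output_parallel_to_input:
  assumes R: "bus_realization Bs Cs E hor bus pt" and E: "E \<subseteq> Bs \<times> Cs"
    and chain: "map_prod fB fC ` chain_edges \<subseteq> E" and inj: "inj fB"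
  shows "hor (fB (CB 4 PB)) = hor (fB (CB 1 PB))"
proof -
  have perp: "hor (fB (CB j PB')) = hor (fB (CB j PB)) \<and> hor (fB (CB j PB)) \<noteq> hor (fB (CB j PA))"
    if "j \<in> {1..4}" for j
  proof -
    have "map_prod (CB j) (CC j) ` perp_edges \<subseteq> chain_edges"
      using that unfolding chain_edges_def by blast
    then have "map_prod (fB \<circ> CB j) (fC \<circ> CC j) ` perp_edges \<subseteq> E"
      using chain by (rule map_prod_image_subset_trans)
    moreover have "inj (fB \<circ> CB j)" using inj by (auto intro: inj_compose inj_onI)
    ultimately show ?thesis using perp_orientation[OF R E] by (metis comp_apply)
  qed
  have flip: "hor (fB (chain_in (Suc j))) \<noteq> hor (fB (CB j PB))" if j: "j \<in> {1..3}" for j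
  proof -
    have "{(CB j PB, Co j), (CB j PB', Co j), (chain_in (Suc j), Co j)} \<subseteq> chain_edges"
      using j unfolding chain_edges_def by blast
    then have "map_prod fB fC ` {(CB j PB, Co j), (CB j PB', Co j), (chain_in (Suc j), Co j)} \<subseteq> E"
      using chain by (meson image_mono order_trans)
    then have e: "(fB (CB j PB), fC (Co j)) \<in> E" "(fB (CB j PB'), fC (Co j)) \<in> E"
      "(fB (chain_in (Suc j)), fC (Co j)) \<in> E"
      by auto
    have "chain_in (Suc j) \<noteq> CB j PB" "chain_in (Suc j) \<noteq> CB j PB'"
      using j by (auto simp: chain_in_def)
    then have "\<not> (hor (fB (CB j PB)) = hor (fB (CB j PB')) \<and>
        hor (fB (CB j PB')) = hor (fB (chain_in (Suc j))))"
      by (intro bus_realization_three_not_parallel[OF R E e]) (simp_all add: inj_eq[OF inj])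
    then show ?thesis using perp j by auto
  qed
  have "chain_in (Suc 1) = CB 2 PB" "chain_in (Suc 2) = CB 3 PB" "chain_in (Suc 3) = CB 4 PA"
    by (simp_all add: chain_in_def)
  then show ?thesis using flip[of 1] flip[of 2] flip[of 3] perp[of 4] by auto
qed

definition vbox_side_bus :: "bool \<Rightarrow> perpB \<Rightarrow> vbB" where
  "vbox_side_bus s r = (case r of PA \<Rightarrow> vbox_base s | PA' \<Rightarrow> VU s | PB \<Rightarrow> VR s | PB' \<Rightarrow> VS s | PC \<Rightarrow> VT s)"

definition vbox_side_conn :: "bool \<Rightarrow> perpC \<Rightarrow> vbC" where
  "vbox_side_conn s x = (case x of Px \<Rightarrow> Vx s | Py \<Rightarrow> Vy s | Pz \<Rightarrow> Vz s)"

lemma vbox_orientation: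
  assumes R: "bus_realization Bs Cs E hor bus pt" and E: "E \<subseteq> Bs \<times> Cs"
    and vbox: "map_prod fB fC ` vbox_edges k l \<subseteq> E" and inj: "inj fB"
  shows vbox_base_perpendicular: "hor (fB (vbox_base False)) \<noteq> hor (fB (vbox_base True))"
    and vbox_connector_parallel_to_base:
      "\<lbrakk>(I, fC (Vo s r)) \<in> E; I \<notin> range fB; 1 \<le> r; r \<le> (if s then k else l)\<rbrakk>
       \<Longrightarrow> hor I = hor (fB (vbox_base s))"
proof -
  have "map_prod VP VPc ` perp_edges \<subseteq> vbox_edges k l"
    unfolding vbox_edges_def by blast
  then have core_E: "map_prod (fB \<circ> VP) (fC \<circ> VPc) ` perp_edges \<subseteq> E"
    using vbox by (rule map_prod_image_subset_trans)
  have core_inj: "inj (fB \<circ> VP)" using inj by (auto intro: inj_compose inj_onI)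
  show "hor (fB (vbox_base False)) \<noteq> hor (fB (vbox_base True))"
    using perp_orientation[OF R E core_E core_inj] by (simp add: vbox_base_def)
next
  assume I: "(I, fC (Vo s r)) \<in> E" "I \<notin> range fB" and r: "1 \<le> r" "r \<le> (if s then k else l)"
  have "map_prod (vbox_side_bus s) (vbox_side_conn s) ` perp_edges \<subseteq> vbox_edges k l"
    unfolding vbox_edges_def perp_edges_def vbox_side_bus_def vbox_side_conn_def by auto
  then have side_E: "map_prod (fB \<circ> vbox_side_bus s) (fC \<circ> vbox_side_conn s) ` perp_edges \<subseteq> E"
    using vbox by (rule map_prod_image_subset_trans)
  have "inj (vbox_side_bus s)"
    by (rule injI) (simp add: vbox_side_bus_def vbox_base_def split: perpB.splits if_splits)
  then have side_inj: "inj (fB \<circ> vbox_side_bus s)" using inj by (rule inj_compose[rotated])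
  have side: "hor (fB (VS s)) = hor (fB (VR s))" "hor (fB (VR s)) \<noteq> hor (fB (vbox_base s))"
    using perp_orientation[OF R E side_E side_inj] by (simp_all add: vbox_side_bus_def)
  have "(VR s, Vo s r) \<in> vbox_edges k l" "(VS s, Vo s r) \<in> vbox_edges k l"
    using r by (cases s; simp add: vbox_edges_def)+
  then have e: "(fB (VR s), fC (Vo s r)) \<in> E" "(fB (VS s), fC (Vo s r)) \<in> E"
    using vbox by auto
  have "\<not> (hor (fB (VR s)) = hor (fB (VS s)) \<and> hor (fB (VS s)) = hor I)"
    by (rule bus_realization_three_not_parallel[OF R E e I(1)]) (use I(2) in \<open>auto simp: inj_eq[OF inj]\<close>)
  then show "hor I = hor (fB (vbox_base s))" using side by auto
qed

context
  fixes n cls hor bus pt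
  assumes R: "bus_realization (fst ` nae_bus_edges n cls) (snd ` nae_bus_edges n cls)
      (nae_bus_edges n cls) hor bus pt"
    and wf: "\<forall>C\<in>set cls. length C = 3 \<and> (\<forall>l\<in>set C. fst l < n)"
begin

lemma nae_output_orientation:
  assumes q: "q < length cls" and s: "s < 3"
  shows "hor (ChB q s (CB 4 PB)) = lit_val (\<lambda>i. hor (VarB i (VP PA))) (cls ! q ! s)"
proof -
  obtain i p where l: "cls ! q ! s = (i, p)" by fastforce
  have len: "length (cls ! q) = 3" using wf q by auto
  have i: "i < n" using wf q s len l by (metis fst_conv nth_mem)
  note E = subset_fst_snd[of "nae_bus_edges n cls"]
  have "hor (ChB q s (CB 4 PB)) = hor (ChB q s (CB 1 PB))"
    by (rule chain_output_parallel_to_input[OF R E nae_bus_edges_chain[OF q s]]) (simp add: inj_def)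
  also have "\<dots> = hor (VarB i (vbox_base p))"
  proof (rule vbox_connector_parallel_to_base[OF R E nae_bus_edges_vbox[OF i]])
    show "(ChB q s (CB 1 PB), VarC i (Vo p (occ_num cls q s))) \<in> nae_bus_edges n cls"
      using nae_bus_edges_literal[OF q s] l by simp
    have "1 \<le> occ_num cls q s \<and> occ_num cls q s \<le> occ_total cls (i, p)"
      using occ_num_bounds[OF q, of s] len s by (simp add: l)
    then show "1 \<le> occ_num cls q s"
      "occ_num cls q s \<le> (if p then occ_total cls (i, True) else occ_total cls (i, False))"
      by (cases p; simp)+
  qed (auto simp: inj_def)
  also have "\<dots> = lit_val (\<lambda>i. hor (VarB i (VP PA))) (cls ! q ! s)"
    using vbox_base_perpendicular[OF R E nae_bus_edges_vbox[OF i]] l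
    by (cases p) (auto simp: inj_def lit_val_def vbox_base_def)
  finally show ?thesis .
qed

lemma nae_sat_if_realization: "nae_sat cls"
  unfolding nae_sat_def
proof (intro exI ballI)
  fix C assume C: "C \<in> set cls"
  then obtain q where q: "q < length cls" "C = cls ! q" by (metis in_set_conv_nth)
  have "length C = 3" using wf C by auto
  then have set_C: "set C = {C ! 0, C ! 1, C ! 2}"
    by (auto simp: set_conv_nth less_Suc_eq numeral_eq_Suc)
  have e: "(ChB q s (CB 4 PB), ClC q) \<in> nae_bus_edges n cls" if "s < 3" for s
    using nae_bus_edges_clause[OF q(1) that] .
  have "\<not> (hor (ChB q 0 (CB 4 PB)) = hor (ChB q 1 (CB 4 PB)) \<and>
      hor (ChB q 1 (CB 4 PB)) = hor (ChB q 2 (CB 4 PB)))"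
    by (rule bus_realization_three_not_parallel[OF R subset_fst_snd e e e]) auto
  then show "(\<exists>l\<in>set C. lit_val (\<lambda>i. hor (VarB i (VP PA))) l) \<and>
      (\<exists>l\<in>set C. \<not> lit_val (\<lambda>i. hor (VarB i (VP PA))) l)"
    using nae_output_orientation[OF q(1)] q(2) set_C by auto
qed

end

section \<open>Layouts with integer coordinates\<close>

text \<open>(x1, x2, y1, y2) stands for the rectangle [x1, x2] \<times> [y1, y2]; buses are rectangles of
  width zero.\<close>

type_synonym rect = "int \<times> int \<times> int \<times> int"

definition rx1 :: "rect \<Rightarrow> int" where "rx1 R = fst R"
definition rx2 :: "rect \<Rightarrow> int" where "rx2 R = fst (snd R)"
definition ry1 :: "rect \<Rightarrow> int" where "ry1 R = fst (snd (snd R))"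
definition ry2 :: "rect \<Rightarrow> int" where "ry2 R = snd (snd (snd R))"

lemma rect_sel [simp]:
  "rx1 (x1, x2, y1, y2) = x1" "rx2 (x1, x2, y1, y2) = x2"
  "ry1 (x1, x2, y1, y2) = y1" "ry2 (x1, x2, y1, y2) = y2"
  by (simp_all add: rx1_def rx2_def ry1_def ry2_def)

definition rects_meet :: "rect \<Rightarrow> rect \<Rightarrow> bool" where
  "rects_meet R S \<longleftrightarrow> rx1 R \<le> rx2 S \<and> rx1 S \<le> rx2 R \<and> ry1 R \<le> ry2 S \<and> ry1 S \<le> ry2 R"

definition in_rect :: "int \<times> int \<Rightarrow> rect \<Rightarrow> bool" where
  "in_rect p R \<longleftrightarrow> rx1 R \<le> fst p \<and> fst p \<le> rx2 R \<and> ry1 R \<le> snd p \<and> snd p \<le> ry2 R"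

definition subrect :: "rect \<Rightarrow> rect \<Rightarrow> bool" where
  "subrect R S \<longleftrightarrow> rx1 S \<le> rx1 R \<and> rx2 R \<le> rx2 S \<and> ry1 S \<le> ry1 R \<and> ry2 R \<le> ry2 S"

definition bus_rect :: "bool \<Rightarrow> rect \<Rightarrow> bool" where
  "bus_rect h R \<longleftrightarrow> rx1 R \<le> rx2 R \<and> ry1 R \<le> ry2 R \<and> (if h then ry1 R = ry2 R else rx1 R = rx2 R)"

definition attaches :: "bool \<Rightarrow> rect \<Rightarrow> int \<times> int \<Rightarrow> bool" where
  "attaches h R p \<longleftrightarrow> (if h then rx1 R \<le> fst p \<and> fst p \<le> rx2 R else ry1 R \<le> snd p \<and> snd p \<le> ry2 R)"

definition edge_rect :: "bool \<Rightarrow> rect \<Rightarrow> int \<times> int \<Rightarrow> rect" where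
  "edge_rect h R p = (if h then (fst p, fst p, min (ry1 R) (snd p), max (ry1 R) (snd p))
                      else (min (rx1 R) (fst p), max (rx1 R) (fst p), snd p, snd p))"

definition grid_layout ::
  "'b set \<Rightarrow> 'c set \<Rightarrow> ('b \<times> 'c) set \<Rightarrow> ('b \<Rightarrow> bool) \<Rightarrow> ('b \<Rightarrow> rect) \<Rightarrow> ('c \<Rightarrow> int \<times> int) \<Rightarrow> bool" where
  "grid_layout Bs Cs E h R P \<longleftrightarrow>
    (\<forall>B\<in>Bs. bus_rect (h B) (R B)) \<and>
    (\<forall>B c. (B, c) \<in> E \<longrightarrow> attaches (h B) (R B) (P c) \<and>
       (\<forall>B'\<in>Bs. B' \<noteq> B \<longrightarrow> \<not> rects_meet (edge_rect (h B) (R B) (P c)) (R B')) \<and>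
       (\<forall>c'\<in>Cs. c' \<noteq> c \<longrightarrow> \<not> in_rect (P c') (edge_rect (h B) (R B) (P c)))) \<and>
    (\<forall>B\<in>Bs. \<forall>B'\<in>Bs. B \<noteq> B' \<longrightarrow> \<not> rects_meet (R B) (R B')) \<and>
    (\<forall>c\<in>Cs. \<forall>c'\<in>Cs. c \<noteq> c' \<longrightarrow> P c \<noteq> P c') \<and>
    (\<forall>B\<in>Bs. \<forall>c\<in>Cs. \<not> in_rect (P c) (R B))"

definition layout_within ::
  "'b set \<Rightarrow> 'c set \<Rightarrow> ('b \<times> 'c) set \<Rightarrow> ('b \<Rightarrow> bool) \<Rightarrow> ('b \<Rightarrow> rect) \<Rightarrow> ('c \<Rightarrow> int \<times> int)
   \<Rightarrow> rect \<Rightarrow> bool" where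
  "layout_within Bs Cs E h R P F \<longleftrightarrow> grid_layout Bs Cs E h R P \<and>
    (\<forall>B\<in>Bs. subrect (R B) F) \<and> (\<forall>c\<in>Cs. in_rect (P c) F) \<and>
    (\<forall>B c. (B, c) \<in> E \<longrightarrow> subrect (edge_rect (h B) (R B) (P c)) F)"

lemma grid_layoutD:
  assumes "grid_layout Bs Cs E h R P"
  shows grid_layout_bus: "\<And>B. B \<in> Bs \<Longrightarrow> bus_rect (h B) (R B)"
    and grid_layout_attaches: "\<And>B c. (B, c) \<in> E \<Longrightarrow> attaches (h B) (R B) (P c)"
    and grid_layout_edge_bus: "\<And>B c B'. (B, c) \<in> E \<Longrightarrow> B' \<in> Bs \<Longrightarrow> B' \<noteq> B \<Longrightarrow>
           \<not> rects_meet (edge_rect (h B) (R B) (P c)) (R B')"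
    and grid_layout_edge_conn: "\<And>B c c'. (B, c) \<in> E \<Longrightarrow> c' \<in> Cs \<Longrightarrow> c' \<noteq> c \<Longrightarrow>
           \<not> in_rect (P c') (edge_rect (h B) (R B) (P c))"
    and grid_layout_bus_bus: "\<And>B B'. B \<in> Bs \<Longrightarrow> B' \<in> Bs \<Longrightarrow> B \<noteq> B' \<Longrightarrow> \<not> rects_meet (R B) (R B')"
    and grid_layout_conn_conn: "\<And>c c'. c \<in> Cs \<Longrightarrow> c' \<in> Cs \<Longrightarrow> c \<noteq> c' \<Longrightarrow> P c \<noteq> P c'"
    and grid_layout_conn_bus: "\<And>B c. B \<in> Bs \<Longrightarrow> c \<in> Cs \<Longrightarrow> \<not> in_rect (P c) (R B)"
  using assms unfolding grid_layout_def by simp_all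

text \<open>The conditions on a single edge, stated with the edge rectangle let-bound so that a
  concrete instance is computed only once.\<close>

definition edge_clear ::
  "'b set \<Rightarrow> 'c set \<Rightarrow> ('b \<Rightarrow> bool) \<Rightarrow> ('b \<Rightarrow> rect) \<Rightarrow> ('c \<Rightarrow> int \<times> int) \<Rightarrow> rect \<Rightarrow> 'b \<Rightarrow> 'c \<Rightarrow> bool"
  where
  "edge_clear Bs Cs h R P F B c \<longleftrightarrow> (let e = edge_rect (h B) (R B) (P c) in
     attaches (h B) (R B) (P c) \<and> (\<forall>B'\<in>Bs. B' \<noteq> B \<longrightarrow> \<not> rects_meet e (R B')) \<and>
     (\<forall>c'\<in>Cs. c' \<noteq> c \<longrightarrow> \<not> in_rect (P c') e) \<and> subrect e F)"

lemma layout_withinI_edge_clear: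
  assumes "\<forall>B\<in>Bs. bus_rect (h B) (R B) \<and> subrect (R B) F"
    and "\<forall>c\<in>Cs. in_rect (P c) F"
    and "\<forall>B\<in>Bs. \<forall>B'\<in>Bs. B \<noteq> B' \<longrightarrow> \<not> rects_meet (R B) (R B')"
    and "\<forall>c\<in>Cs. \<forall>c'\<in>Cs. c \<noteq> c' \<longrightarrow> P c \<noteq> P c'"
    and "\<forall>B\<in>Bs. \<forall>c\<in>Cs. \<not> in_rect (P c) (R B)"
    and "\<forall>(B, c)\<in>E. edge_clear Bs Cs h R P F B c"
  shows "layout_within Bs Cs E h R P F"
  using assms unfolding layout_within_def grid_layout_def edge_clear_def Let_def by fast

definition real_pt :: "int \<times> int \<Rightarrow> real \<times> real" where
  "real_pt p = (of_int (fst p), of_int (snd p))"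

definition rect_points :: "rect \<Rightarrow> (real \<times> real) set" where
  "rect_points R = {of_int (rx1 R)..of_int (rx2 R)} \<times> {of_int (ry1 R)..of_int (ry2 R)}"

definition rect_seg :: "rect \<Rightarrow> (real \<times> real) \<times> (real \<times> real)" where
  "rect_seg R = (real_pt (rx1 R, ry1 R), real_pt (rx2 R, ry2 R))"

definition edge_foot :: "bool \<Rightarrow> rect \<Rightarrow> int \<times> int \<Rightarrow> real \<times> real" where
  "edge_foot h R p = (if h then real_pt (fst p, ry1 R) else real_pt (rx1 R, snd p))"

lemma closed_segment_axis_parallel:
  fixes a b :: "real \<times> real"
  assumes "fst a = fst b \<or> snd a = snd b"
  shows "closed_segment a b =
    {min (fst a) (fst b)..max (fst a) (fst b)} \<times> {min (snd a) (snd b)..max (snd a) (snd b)}"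
  using assms by (auto simp: closed_segment_same_fst closed_segment_same_snd closed_segment_eq_real_ivl
      split: if_splits)

lemma rects_meet_iff_points:
  assumes "rx1 R \<le> rx2 R" "ry1 R \<le> ry2 R" "rx1 S \<le> rx2 S" "ry1 S \<le> ry2 S"
  shows "rects_meet R S \<longleftrightarrow> rect_points R \<inter> rect_points S \<noteq> {}"
proof
  assume "rects_meet R S"
  then have "real_pt (max (rx1 R) (rx1 S), max (ry1 R) (ry1 S)) \<in> rect_points R \<inter> rect_points S"
    using assms unfolding rects_meet_def rect_points_def real_pt_def by auto
  then show "rect_points R \<inter> rect_points S \<noteq> {}" by blast
next
  assume "rect_points R \<inter> rect_points S \<noteq> {}"
  then show "rects_meet R S" unfolding rect_points_def rects_meet_def by (auto; linarith)
qed

lemma in_rect_iff_points: "in_rect p R \<longleftrightarrow> real_pt p \<in> rect_points R"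
  unfolding in_rect_def rect_points_def real_pt_def by auto

lemma seg_rect_seg: "bus_rect h R \<Longrightarrow> seg (rect_seg R) = rect_points R"
  unfolding seg_def rect_seg_def rect_points_def bus_rect_def real_pt_def
  by (subst closed_segment_axis_parallel) (auto split: if_splits)

lemma closed_segment_edge_foot:
  "closed_segment (edge_foot h R p) (real_pt p) = rect_points (edge_rect h R p)"
  unfolding edge_foot_def real_pt_def edge_rect_def rect_points_def
  by (subst closed_segment_axis_parallel) (auto simp: min_def max_def)

lemma bus_realization_if_grid_layout:
  assumes E: "E \<subseteq> Bs \<times> Cs" and L: "grid_layout Bs Cs E h R P"
  shows "bus_realization Bs Cs E h (\<lambda>B. rect_seg (R B)) (\<lambda>c. real_pt (P c))"
proof -
  have wf: "rx1 (R B) \<le> rx2 (R B)" "ry1 (R B) \<le> ry2 (R B)" if "B \<in> Bs" for B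
    using grid_layout_bus[OF L that] unfolding bus_rect_def by auto
  have seg: "seg (rect_seg (R B)) = rect_points (R B)" if "B \<in> Bs" for B
    using seg_rect_seg grid_layout_bus[OF L that] by blast
  have edge_wf: "rx1 (edge_rect h' R' p) \<le> rx2 (edge_rect h' R' p)"
    "ry1 (edge_rect h' R' p) \<le> ry2 (edge_rect h' R' p)" for h' R' p
    unfolding edge_rect_def by auto
  have "bus_ok (h B) (rect_seg (R B))" if "B \<in> Bs" for B
    using grid_layout_bus[OF L that] unfolding bus_ok_def rect_seg_def bus_rect_def real_pt_def by auto
  moreover have "grid_point (real_pt p)" for p
    unfolding grid_point_def real_pt_def by auto
  moreover have "\<exists>u\<in>seg (rect_seg (R B)).
      (if h B then fst u = fst (real_pt (P c)) else snd u = snd (real_pt (P c))) \<and>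
      (\<forall>B'\<in>Bs. B' \<noteq> B \<longrightarrow> closed_segment u (real_pt (P c)) \<inter> seg (rect_seg (R B')) = {}) \<and>
      (\<forall>c'\<in>Cs. c' \<noteq> c \<longrightarrow> real_pt (P c') \<notin> closed_segment u (real_pt (P c)))"
    if e: "(B, c) \<in> E" for B c
  proof (intro bexI conjI ballI impI)
    have B: "B \<in> Bs" using e E by auto
    show "edge_foot (h B) (R B) (P c) \<in> seg (rect_seg (R B))"
      using grid_layout_attaches[OF L e] grid_layout_bus[OF L B]
      unfolding seg[OF B] edge_foot_def rect_points_def attaches_def bus_rect_def real_pt_def
      by (auto split: if_splits)
    show "if h B then fst (edge_foot (h B) (R B) (P c)) = fst (real_pt (P c))
          else snd (edge_foot (h B) (R B) (P c)) = snd (real_pt (P c))"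
      unfolding edge_foot_def real_pt_def by auto
    fix B' assume "B' \<in> Bs" "B' \<noteq> B"
    with grid_layout_edge_bus[OF L e] rects_meet_iff_points[OF edge_wf wf]
    show "closed_segment (edge_foot (h B) (R B) (P c)) (real_pt (P c)) \<inter> seg (rect_seg (R B')) = {}"
      unfolding closed_segment_edge_foot seg[OF \<open>B' \<in> Bs\<close>] by blast
  next
    fix c' assume "c' \<in> Cs" "c' \<noteq> c"
    with grid_layout_edge_conn[OF L e]
    show "real_pt (P c') \<notin> closed_segment (edge_foot (h B) (R B) (P c)) (real_pt (P c))"
      unfolding closed_segment_edge_foot in_rect_iff_points by blast
  qed
  moreover have "seg (rect_seg (R B)) \<inter> seg (rect_seg (R B')) = {}"
    if "B \<in> Bs" "B' \<in> Bs" "B \<noteq> B'" for B B'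
    using grid_layout_bus_bus[OF L that] rects_meet_iff_points[OF wf wf] seg that by metis
  moreover have "real_pt (P c) \<noteq> real_pt (P c')" if "c \<in> Cs" "c' \<in> Cs" "c \<noteq> c'" for c c'
    using grid_layout_conn_conn[OF L that] unfolding real_pt_def by (auto simp: prod_eq_iff)
  moreover have "real_pt (P c) \<notin> seg (rect_seg (R B))" if "B \<in> Bs" "c \<in> Cs" for B c
    using grid_layout_conn_bus[OF L that] seg[OF that(1)] in_rect_iff_points by metis
  ultimately show ?thesis
    unfolding bus_realization_def by (auto simp: split_beta)
qed

lemma layout_withinD:
  assumes "layout_within Bs Cs E h R P F"
  shows layout_within_grid: "grid_layout Bs Cs E h R P"
    and layout_within_bus: "\<And>B. B \<in> Bs \<Longrightarrow> subrect (R B) F"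
    and layout_within_conn: "\<And>c. c \<in> Cs \<Longrightarrow> in_rect (P c) F"
    and layout_within_edge: "\<And>B c. (B, c) \<in> E \<Longrightarrow> subrect (edge_rect (h B) (R B) (P c)) F"
  using assms unfolding layout_within_def by simp_all

lemma layout_within_mono:
  assumes "layout_within Bs Cs E h R P F" "Bs' \<subseteq> Bs" "Cs' \<subseteq> Cs" "E' \<subseteq> E"
  shows "layout_within Bs' Cs' E' h R P F"
  using assms unfolding layout_within_def grid_layout_def by (meson subsetD)

lemma grid_layoutI:
  assumes "\<And>B. B \<in> Bs \<Longrightarrow> bus_rect (h B) (R B)"
    and "\<And>B c. (B, c) \<in> E \<Longrightarrow> attaches (h B) (R B) (P c)"
    and "\<And>B c B'. (B, c) \<in> E \<Longrightarrow> B' \<in> Bs \<Longrightarrow> B' \<noteq> B \<Longrightarrow>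
           \<not> rects_meet (edge_rect (h B) (R B) (P c)) (R B')"
    and "\<And>B c c'. (B, c) \<in> E \<Longrightarrow> c' \<in> Cs \<Longrightarrow> c' \<noteq> c \<Longrightarrow>
           \<not> in_rect (P c') (edge_rect (h B) (R B) (P c))"
    and "\<And>B B'. B \<in> Bs \<Longrightarrow> B' \<in> Bs \<Longrightarrow> B \<noteq> B' \<Longrightarrow> \<not> rects_meet (R B) (R B')"
    and "\<And>c c'. c \<in> Cs \<Longrightarrow> c' \<in> Cs \<Longrightarrow> c \<noteq> c' \<Longrightarrow> P c \<noteq> P c'"
    and "\<And>B c. B \<in> Bs \<Longrightarrow> c \<in> Cs \<Longrightarrow> \<not> in_rect (P c) (R B)"
  shows "grid_layout Bs Cs E h R P"
  using assms unfolding grid_layout_def by simp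

lemma layout_withinI:
  assumes "grid_layout Bs Cs E h R P"
    and "\<And>B. B \<in> Bs \<Longrightarrow> subrect (R B) F" "\<And>c. c \<in> Cs \<Longrightarrow> in_rect (P c) F"
    and "\<And>B c. (B, c) \<in> E \<Longrightarrow> subrect (edge_rect (h B) (R B) (P c)) F"
  shows "layout_within Bs Cs E h R P F"
  using assms unfolding layout_within_def by simp

lemma layout_within_rename:
  assumes L: "layout_within Bs Cs E h R P F"
    and B: "\<And>B. B \<in> Bs \<Longrightarrow> h' (f B) = h B \<and> R' (f B) = R B"
    and C: "\<And>c. c \<in> Cs \<Longrightarrow> P' (g c) = P c"
    and E: "E \<subseteq> Bs \<times> Cs"
  shows "layout_within (f ` Bs) (g ` Cs) (map_prod f g ` E) h' R' P' F"
proof -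
  note G = grid_layoutD[OF layout_within_grid[OF L]]
  have E': "B \<in> Bs" "c \<in> Cs" if "(B, c) \<in> E" for B c using E that by auto
  show ?thesis
  proof (intro layout_withinI grid_layoutI)
    fix B' c' B'' assume "(B', c') \<in> map_prod f g ` E" "B'' \<in> f ` Bs" "B'' \<noteq> B'"
    then obtain B c B0 where "(B, c) \<in> E" "B0 \<in> Bs" "B0 \<noteq> B" "B' = f B" "c' = g c" "B'' = f B0"
      by auto
    then show "\<not> rects_meet (edge_rect (h' B') (R' B') (P' c')) (R' B'')"
      using G(3) E' B C by auto
  next
    fix B' c' c'' assume "(B', c') \<in> map_prod f g ` E" "c'' \<in> g ` Cs" "c'' \<noteq> c'"
    then obtain B c c0 where "(B, c) \<in> E" "c0 \<in> Cs" "c0 \<noteq> c" "B' = f B" "c' = g c" "c'' = g c0"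
      by auto
    then show "\<not> in_rect (P' c'') (edge_rect (h' B') (R' B') (P' c'))"
      using G(4) E' B C by auto
  next
    fix B' B'' assume "B' \<in> f ` Bs" "B'' \<in> f ` Bs" "B' \<noteq> B''"
    then obtain B0 B1 where "B0 \<in> Bs" "B1 \<in> Bs" "B0 \<noteq> B1" "B' = f B0" "B'' = f B1" by blast
    then show "\<not> rects_meet (R' B') (R' B'')" using G(5) B by auto
  next
    fix c' c'' assume "c' \<in> g ` Cs" "c'' \<in> g ` Cs" "c' \<noteq> c''"
    then obtain c0 c1 where "c0 \<in> Cs" "c1 \<in> Cs" "c0 \<noteq> c1" "c' = g c0" "c'' = g c1" by blast
    then show "P' c' \<noteq> P' c''" using G(6) C by auto
  qed (use G(1,2,7) layout_withinD(2-4)[OF L] E' B C in auto)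
qed

lemma rects_apart_subrects: "\<not> rects_meet F F' \<Longrightarrow> subrect X F \<Longrightarrow> subrect Y F' \<Longrightarrow> \<not> rects_meet X Y"
  unfolding rects_meet_def subrect_def by auto

lemma rects_apart_subrect_point: "\<not> rects_meet F F' \<Longrightarrow> subrect X F \<Longrightarrow> in_rect p F' \<Longrightarrow> \<not> in_rect p X"
  unfolding rects_meet_def subrect_def in_rect_def by auto

lemma rects_apart_points: "\<not> rects_meet F F' \<Longrightarrow> in_rect p F \<Longrightarrow> in_rect q F' \<Longrightarrow> p \<noteq> q"
  unfolding rects_meet_def in_rect_def by auto

lemma grid_layout_by_regions:
  fixes regB :: "'b \<Rightarrow> 'r" and regC :: "'c \<Rightarrow> 'r" and frame :: "'r \<Rightarrow> rect"
  assumes E: "E \<subseteq> Bs \<times> Cs" and regions: "regB ` Bs \<subseteq> Rs" "regC ` Cs \<subseteq> Rs"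
    and disjoint: "\<And>r r'. r \<in> Rs \<Longrightarrow> r' \<in> Rs \<Longrightarrow> r \<noteq> r' \<Longrightarrow> \<not> rects_meet (frame r) (frame r')"
    and local: "\<And>r. r \<in> Rs \<Longrightarrow> layout_within {B\<in>Bs. regB B = r} {c\<in>Cs. regC c = r}
                   {(B, c)\<in>E. regB B = r \<and> regC c = r} h R P (frame r)"
    and cross_attaches: "\<And>B c. (B, c) \<in> E \<Longrightarrow> regB B \<noteq> regC c \<Longrightarrow> attaches (h B) (R B) (P c)"
    and cross_bus: "\<And>B c B'. (B, c) \<in> E \<Longrightarrow> regB B \<noteq> regC c \<Longrightarrow> B' \<in> Bs \<Longrightarrow> B' \<noteq> B \<Longrightarrow>
          regB B' \<in> {regB B, regC c} \<Longrightarrow> \<not> rects_meet (edge_rect (h B) (R B) (P c)) (R B')"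
    and cross_conn: "\<And>B c c'. (B, c) \<in> E \<Longrightarrow> regB B \<noteq> regC c \<Longrightarrow> c' \<in> Cs \<Longrightarrow> c' \<noteq> c \<Longrightarrow>
          regC c' \<in> {regB B, regC c} \<Longrightarrow> \<not> in_rect (P c') (edge_rect (h B) (R B) (P c))"
    and cross_frame: "\<And>B c r. (B, c) \<in> E \<Longrightarrow> regB B \<noteq> regC c \<Longrightarrow> r \<in> Rs \<Longrightarrow>
          r \<notin> {regB B, regC c} \<Longrightarrow> \<not> rects_meet (edge_rect (h B) (R B) (P c)) (frame r)"
  shows "grid_layout Bs Cs E h R P"
proof -
  let ?e = "\<lambda>B c. edge_rect (h B) (R B) (P c)"
  have regB: "regB B \<in> Rs" if "B \<in> Bs" for B using that regions by auto
  have regC: "regC c \<in> Rs" if "c \<in> Cs" for c using that regions by auto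
  have LB: "grid_layout {B'\<in>Bs. regB B' = regB B} {c\<in>Cs. regC c = regB B}
      {(B', c)\<in>E. regB B' = regB B \<and> regC c = regB B} h R P" if "B \<in> Bs" for B
    using layout_within_grid[OF local[OF regB[OF that]]] .
  have LC: "grid_layout {B\<in>Bs. regB B = regC c} {c'\<in>Cs. regC c' = regC c}
      {(B, c')\<in>E. regB B = regC c \<and> regC c' = regC c} h R P" if "c \<in> Cs" for c
    using layout_within_grid[OF local[OF regC[OF that]]] .
  have bus_in_frame: "subrect (R B) (frame (regB B))" if "B \<in> Bs" for B
    using layout_within_bus[OF local[OF regB[OF that]]] that by auto
  have conn_in_frame: "in_rect (P c) (frame (regC c))" if "c \<in> Cs" for c
    using layout_within_conn[OF local[OF regC[OF that]]] that by auto
  have edge_in_frame: "subrect (?e B c) (frame (regB B))" if "(B, c) \<in> E" "regB B = regC c" for B c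
  proof -
    have "B \<in> Bs" using that E by auto
    then show ?thesis using layout_within_edge[OF local[OF regB[of B]]] that by auto
  qed
  have frames_apart: "\<not> rects_meet (frame r) (frame r')" if "r \<in> Rs" "r' \<in> Rs" "r \<noteq> r'" for r r'
    using disjoint that .
  have EB: "B \<in> Bs" and EC: "c \<in> Cs" if "(B, c) \<in> E" for B c using E that by auto
  show ?thesis
  proof (rule grid_layoutI)
    fix B assume "B \<in> Bs"
    then show "bus_rect (h B) (R B)" using grid_layout_bus[OF LB] by blast
  next
    fix B c assume "(B, c) \<in> E"
    then show "attaches (h B) (R B) (P c)"
      using grid_layout_attaches[OF LB[OF EB]] cross_attaches by fastforce
  next
    fix B c B' assume e: "(B, c) \<in> E" and B': "B' \<in> Bs" "B' \<noteq> B"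
    show "\<not> rects_meet (?e B c) (R B')"
    proof (cases "regB B = regC c")
      case internal: True
      show ?thesis
      proof (cases "regB B' = regB B")
        case True
        then show ?thesis using grid_layout_edge_bus[OF LB[OF EB[OF e]]] e internal B' by auto
      next
        case False
        then show ?thesis
          using rects_apart_subrects[OF frames_apart edge_in_frame[OF e internal] bus_in_frame]
            regB EB e B' by metis
      qed
    next
      case cross: False
      show ?thesis
      proof (cases "regB B' \<in> {regB B, regC c}")
        case True then show ?thesis using cross_bus e cross B' by blast
      next
        case False
        then show ?thesis
          using cross_frame[OF e cross regB[OF B'(1)] False] bus_in_frame[OF B'(1)]
          unfolding rects_meet_def subrect_def by auto
      qed
    qed
  next
    fix B c c' assume e: "(B, c) \<in> E" and c': "c' \<in> Cs" "c' \<noteq> c"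
    show "\<not> in_rect (P c') (?e B c)"
    proof (cases "regB B = regC c")
      case internal: True
      show ?thesis
      proof (cases "regC c' = regB B")
        case True
        then show ?thesis using grid_layout_edge_conn[OF LB[OF EB[OF e]]] e internal c' by auto
      next
        case False
        then show ?thesis
          using rects_apart_subrect_point[OF frames_apart edge_in_frame[OF e internal] conn_in_frame]
            regB regC EB e c' by metis
      qed
    next
      case cross: False
      show ?thesis
      proof (cases "regC c' \<in> {regB B, regC c}")
        case True then show ?thesis using cross_conn e cross c' by blast
      next
        case False
        then show ?thesis
          using cross_frame[OF e cross regC[OF c'(1)] False] conn_in_frame[OF c'(1)]
          unfolding rects_meet_def in_rect_def by auto
      qed
    qed
  next
    fix B B' assume B: "B \<in> Bs" "B' \<in> Bs" "B \<noteq> B'"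
    show "\<not> rects_meet (R B) (R B')"
    proof (cases "regB B' = regB B")
      case True then show ?thesis using grid_layout_bus_bus[OF LB[OF B(1)]] B by auto
    next
      case False
      then show ?thesis
        using rects_apart_subrects[OF frames_apart bus_in_frame bus_in_frame] regB B by metis
    qed
  next
    fix c c' assume c: "c \<in> Cs" "c' \<in> Cs" "c \<noteq> c'"
    show "P c \<noteq> P c'"
    proof (cases "regC c' = regC c")
      case True then show ?thesis using grid_layout_conn_conn[OF LC[OF c(1)]] c by auto
    next
      case False
      then show ?thesis
        using rects_apart_points[OF frames_apart conn_in_frame conn_in_frame] regC c by metis
    qed
  next
    fix B c assume B: "B \<in> Bs" and c: "c \<in> Cs"
    show "\<not> in_rect (P c) (R B)"
    proof (cases "regC c = regB B")
      case True then show ?thesis using grid_layout_conn_bus[OF LB[OF B]] c B by auto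
    next
      case False
      then show ?thesis
        using rects_apart_subrect_point[OF frames_apart bus_in_frame conn_in_frame] regB regC B c by metis
    qed
  qed
qed

definition tr_pt :: "bool \<Rightarrow> int \<times> int \<Rightarrow> int \<times> int" where
  "tr_pt t p = (if t then p else (snd p, fst p))"

definition tr_rect :: "bool \<Rightarrow> rect \<Rightarrow> rect" where
  "tr_rect t R = (if t then R else (ry1 R, ry2 R, rx1 R, rx2 R))"

definition shift_pt :: "int \<Rightarrow> int \<Rightarrow> int \<times> int \<Rightarrow> int \<times> int" where
  "shift_pt dx dy p = (fst p + dx, snd p + dy)"

definition shift_rect :: "int \<Rightarrow> int \<Rightarrow> rect \<Rightarrow> rect" where
  "shift_rect dx dy R = (rx1 R + dx, rx2 R + dx, ry1 R + dy, ry2 R + dy)"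

lemma tr_rect_sel [simp]:
  "rx1 (tr_rect t R) = (if t then rx1 R else ry1 R)" "rx2 (tr_rect t R) = (if t then rx2 R else ry2 R)"
  "ry1 (tr_rect t R) = (if t then ry1 R else rx1 R)" "ry2 (tr_rect t R) = (if t then ry2 R else rx2 R)"
  by (simp_all add: tr_rect_def)

lemma shift_rect_sel [simp]:
  "rx1 (shift_rect dx dy R) = rx1 R + dx" "rx2 (shift_rect dx dy R) = rx2 R + dx"
  "ry1 (shift_rect dx dy R) = ry1 R + dy" "ry2 (shift_rect dx dy R) = ry2 R + dy"
  by (simp_all add: shift_rect_def)

lemma tr_pt_sel [simp]:
  "fst (tr_pt t p) = (if t then fst p else snd p)" "snd (tr_pt t p) = (if t then snd p else fst p)"
  by (simp_all add: tr_pt_def)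

lemma shift_pt_sel [simp]: "fst (shift_pt dx dy p) = fst p + dx" "snd (shift_pt dx dy p) = snd p + dy"
  by (simp_all add: shift_pt_def)

lemma tr_pt_eq_iff [simp]: "tr_pt t p = tr_pt t q \<longleftrightarrow> p = q"
  by (auto simp: tr_pt_def prod_eq_iff)

lemma shift_pt_eq_iff [simp]: "shift_pt dx dy p = shift_pt dx dy q \<longleftrightarrow> p = q"
  by (auto simp: shift_pt_def prod_eq_iff)

lemma tr_invariants [simp]:
  "rects_meet (tr_rect t R) (tr_rect t S) \<longleftrightarrow> rects_meet R S"
  "in_rect (tr_pt t p) (tr_rect t R) \<longleftrightarrow> in_rect p R"
  "subrect (tr_rect t R) (tr_rect t S) \<longleftrightarrow> subrect R S"
  "bus_rect (h = t) (tr_rect t R) \<longleftrightarrow> bus_rect h R"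
  "attaches (h = t) (tr_rect t R) (tr_pt t p) \<longleftrightarrow> attaches h R p"
  "edge_rect (h = t) (tr_rect t R) (tr_pt t p) = tr_rect t (edge_rect h R p)"
  by (cases t; auto simp: rects_meet_def in_rect_def subrect_def bus_rect_def attaches_def
      edge_rect_def tr_rect_def)+

lemma shift_invariants [simp]:
  "rects_meet (shift_rect dx dy R) (shift_rect dx dy S) \<longleftrightarrow> rects_meet R S"
  "in_rect (shift_pt dx dy p) (shift_rect dx dy R) \<longleftrightarrow> in_rect p R"
  "subrect (shift_rect dx dy R) (shift_rect dx dy S) \<longleftrightarrow> subrect R S"
  "bus_rect h (shift_rect dx dy R) \<longleftrightarrow> bus_rect h R"
  "attaches h (shift_rect dx dy R) (shift_pt dx dy p) \<longleftrightarrow> attaches h R p"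
  "edge_rect h (shift_rect dx dy R) (shift_pt dx dy p) = shift_rect dx dy (edge_rect h R p)"
  by (auto simp: rects_meet_def in_rect_def subrect_def bus_rect_def attaches_def edge_rect_def
      shift_rect_def)

lemma layout_within_place:
  assumes "layout_within Bs Cs E h R P F"
  shows "layout_within Bs Cs E (\<lambda>B. h B = t) (\<lambda>B. tr_rect t (shift_rect dx dy (R B)))
    (\<lambda>c. tr_pt t (shift_pt dx dy (P c))) (tr_rect t (shift_rect dx dy F))"
  using assms unfolding layout_within_def grid_layout_def by simp

section \<open>Drawings of the gadgets\<close>

text \<open>In a flipper, its output connector o is represented by None.\<close>

definition flipper_bus :: "perpB \<Rightarrow> bool \<times> rect" where
  "flipper_bus r = (case r of
       PA \<Rightarrow> (False, (-6, -6, -4, -1)) | PA' \<Rightarrow> (False, (-1, -1, -4, -1))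
     | PB \<Rightarrow> (True, (-5, 1, -5, -5)) | PB' \<Rightarrow> (True, (-4, 1, 1, 1)) | PC \<Rightarrow> (True, (-5, -4, -2, -2)))"

definition flipper_conn :: "perpC option \<Rightarrow> int \<times> int" where
  "flipper_conn x = (case x of Some Px \<Rightarrow> (-3, -4) | Some Py \<Rightarrow> (-5, -3) | Some Pz \<Rightarrow> (-4, -1)
                      | None \<Rightarrow> (1, 0))"

definition flipper_edges :: "(perpB \<times> perpC option) set" where
  "flipper_edges = map_prod id Some ` perp_edges \<union> {(PB, None), (PB', None)}"

definition flipper_frame :: rect where "flipper_frame = (-6, 1, -5, 1)"

text \<open>In the final perp the output bus O (role PB) is the topmost bus if up holds and the lowest
  one otherwise, so that it can be attached to a connector above or below the drawing.\<close>

definition final_perp_bus :: "bool \<Rightarrow> perpB \<Rightarrow> bool \<times> rect" where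
  "final_perp_bus up r = (if up then
       (case r of PA \<Rightarrow> (False, (-2, -2, 18, 21)) | PA' \<Rightarrow> (False, (3, 3, 18, 21))
        | PB \<Rightarrow> (True, (-1, 1, 22, 22)) | PB' \<Rightarrow> (True, (0, 1, 16, 16)) | PC \<Rightarrow> (True, (-1, 0, 19, 19)))
     else
       (case r of PA \<Rightarrow> (False, (-2, -2, 19, 22)) | PA' \<Rightarrow> (False, (3, 3, 19, 22))
        | PB \<Rightarrow> (True, (-1, 1, 18, 18)) | PB' \<Rightarrow> (True, (0, 1, 24, 24)) | PC \<Rightarrow> (True, (-1, 0, 21, 21))))"

definition final_perp_conn :: "bool \<Rightarrow> perpC \<Rightarrow> int \<times> int" where
  "final_perp_conn up x = (if up then (case x of Px \<Rightarrow> (1, 21) | Py \<Rightarrow> (-1, 20) | Pz \<Rightarrow> (0, 18))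
                           else (case x of Px \<Rightarrow> (1, 19) | Py \<Rightarrow> (-1, 20) | Pz \<Rightarrow> (0, 22)))"

definition final_perp_frame :: rect where "final_perp_frame = (-2, 3, 16, 24)"

lemma all_perpB: "(\<forall>r. P r) \<longleftrightarrow> P PA \<and> P PA' \<and> P PB \<and> P PB' \<and> P PC"
  by (metis perpB.exhaust)

lemma all_perpC: "(\<forall>x. P x) \<longleftrightarrow> P Px \<and> P Py \<and> P Pz"
  by (metis perpC.exhaust)

lemma all_option: "(\<forall>x. P x) \<longleftrightarrow> P None \<and> (\<forall>y. P (Some y))"
  by (metis option.exhaust)

lemmas layout_shape_defs = edge_clear_def Let_def bus_rect_def attaches_def edge_rect_def
  rects_meet_def in_rect_def subrect_def

lemma flipper_layout:
  "layout_within UNIV UNIV flipper_edges (\<lambda>r. fst (flipper_bus r)) (\<lambda>r. snd (flipper_bus r))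
     flipper_conn flipper_frame"
  by (rule layout_withinI_edge_clear)
    (simp_all add: all_perpB all_perpC all_option flipper_edges_def perp_edges_def
      flipper_bus_def flipper_conn_def flipper_frame_def layout_shape_defs)

lemma final_perp_layout:
  "layout_within UNIV UNIV perp_edges (\<lambda>r. fst (final_perp_bus up r)) (\<lambda>r. snd (final_perp_bus up r))
     (final_perp_conn up) final_perp_frame"
  by (rule layout_withinI_edge_clear; cases up)
    (simp_all add: all_perpB all_perpC perp_edges_def final_perp_bus_def final_perp_conn_def
      final_perp_frame_def layout_shape_defs)

text \<open>Stages 1--3 of a chain are copies of the flipper; stage 2 is transposed.  Stage 1 is drawn
  around a first node, stages 2--4 around a second node.\<close>

definition stage_tr :: "nat \<Rightarrow> bool" where "stage_tr j = (j \<noteq> 2)"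
definition stage_dx :: "nat \<Rightarrow> int" where "stage_dx j = (if j = 3 then -40 else 0)"
definition stage_dy :: "nat \<Rightarrow> int" where "stage_dy j = (if j = 2 then -40 else if j = 3 then 20 else 0)"

definition chain_bus :: "bool \<Rightarrow> chB \<Rightarrow> bool \<times> rect" where
  "chain_bus up b = (case b of CB j r \<Rightarrow>
     if j = 4 then final_perp_bus up r
     else (fst (flipper_bus r) = stage_tr j,
           tr_rect (stage_tr j) (shift_rect (stage_dx j) (stage_dy j) (snd (flipper_bus r)))))"

definition chain_conn :: "bool \<Rightarrow> chC \<Rightarrow> int \<times> int" where
  "chain_conn up c = (case c of
       CC j x \<Rightarrow> if j = 4 then final_perp_conn up x
                 else tr_pt (stage_tr j) (shift_pt (stage_dx j) (stage_dy j) (flipper_conn (Some x)))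
     | Co j \<Rightarrow> tr_pt (stage_tr j) (shift_pt (stage_dx j) (stage_dy j) (flipper_conn None)))"

definition chain_part :: "chB \<Rightarrow> nat" where
  "chain_part b = (case b of CB j r \<Rightarrow> if j = 1 then 1 else 2)"

definition chain_conn_part :: "chC \<Rightarrow> nat" where
  "chain_conn_part c = (case c of CC j x \<Rightarrow> if j = 1 then 1 else 2 | Co j \<Rightarrow> if j = 1 then 1 else 2)"

definition chain_frame :: "nat \<Rightarrow> rect" where
  "chain_frame k = (if k = 1 then flipper_frame else (-46, 3, -6, 24))"

definition chain_buses :: "chB set" where "chain_buses = (\<Union>j\<in>{1, 2, 3, 4}. range (CB j))"

definition chain_conns :: "chC set" where
  "chain_conns = (\<Union>j\<in>{1, 2, 3, 4}. range (CC j)) \<union> {Co 1, Co 2, Co 3}"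

lemma chain_edgesE:
  assumes "(b, c) \<in> chain_edges"
  obtains (perp) j r x where "j \<in> {1, 2, 3, 4}" "(r, x) \<in> perp_edges" "b = CB j r" "c = CC j x"
  | (out) j where "j \<in> {1, 2, 3}" "b = CB j PB \<or> b = CB j PB'" "c = Co j"
  | (link1) "b = CB 2 PB" "c = Co 1"
  | (link2) "b = CB 3 PB" "c = Co 2"
  | (link3) "b = CB 4 PA" "c = Co 3"
proof -
  have "{1..4::nat} = {1, 2, 3, 4}" "{1..3::nat} = {1, 2, 3}" by auto
  then show ?thesis
    using assms that unfolding chain_edges_def chain_in_def by fastforce
qed

lemma chain_edges_subset: "chain_edges \<subseteq> chain_buses \<times> chain_conns"
  by (auto elim: chain_edgesE simp: chain_buses_def chain_conns_def)

lemma chain_stage_layout: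
  assumes "j \<in> {1, 2, 3}"
  shows "layout_within (range (CB j)) (insert (Co j) (range (CC j)))
    (map_prod (CB j) (CC j) ` perp_edges \<union> {(CB j PB, Co j), (CB j PB', Co j)})
    (\<lambda>b. fst (chain_bus up b)) (\<lambda>b. snd (chain_bus up b)) (chain_conn up)
    (tr_rect (stage_tr j) (shift_rect (stage_dx j) (stage_dy j) flipper_frame))"
proof -
  have conns: "insert (Co j) (range (CC j)) = case_option (Co j) (CC j) ` UNIV"
    by (simp add: UNIV_option_conv image_image)
  have edges: "map_prod (CB j) (CC j) ` perp_edges \<union> {(CB j PB, Co j), (CB j PB', Co j)} =
      map_prod (CB j) (case_option (Co j) (CC j)) ` flipper_edges"
    unfolding flipper_edges_def image_Un image_image by (simp add: map_prod_def split_def)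
  show ?thesis unfolding conns edges
    by (rule layout_within_rename[OF layout_within_place[OF flipper_layout]])
      (use assms in \<open>auto simp: chain_bus_def chain_conn_def split: option.split\<close>)
qed

lemma chain_final_layout:
  "layout_within (CB 4 ` UNIV) (CC 4 ` UNIV) (map_prod (CB 4) (CC 4) ` perp_edges)
    (\<lambda>b. fst (chain_bus up b)) (\<lambda>b. snd (chain_bus up b)) (chain_conn up) final_perp_frame"
  by (rule layout_within_rename[OF final_perp_layout]) (auto simp: chain_bus_def chain_conn_def)

definition chain_stage :: "chB \<Rightarrow> nat" where "chain_stage b = (case b of CB j r \<Rightarrow> j)"

definition chain_conn_stage :: "chC \<Rightarrow> nat" where
  "chain_conn_stage c = (case c of CC j x \<Rightarrow> j | Co j \<Rightarrow> j)"

definition stage_frame :: "nat \<Rightarrow> rect" where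
  "stage_frame j = (if j = 4 then final_perp_frame
                    else tr_rect (stage_tr j) (shift_rect (stage_dx j) (stage_dy j) flipper_frame))"

lemma ball_range_iff: "(\<forall>x\<in>range f. P x) \<longleftrightarrow> (\<forall>y. P (f y))"
  by auto

lemma chain_part_sets:
  "{b \<in> chain_buses. chain_part b = 1} = range (CB 1)"
  "{b \<in> chain_buses. chain_part b = 2} = range (CB 2) \<union> range (CB 3) \<union> range (CB 4)"
  "{c \<in> chain_conns. chain_conn_part c = 1} = insert (Co 1) (range (CC 1))"
  "{c \<in> chain_conns. chain_conn_part c = 2} = {Co 2, Co 3} \<union> range (CC 2) \<union> range (CC 3) \<union> range (CC 4)"
  unfolding chain_buses_def chain_conns_def chain_part_def chain_conn_part_def by auto

lemma chain_edge_in_stage: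
  assumes "(b, c) \<in> chain_edges" "chain_stage b = j" "chain_conn_stage c = j"
  shows "(b, c) \<in> map_prod (CB j) (CC j) ` perp_edges \<union> {(CB j PB, Co j), (CB j PB', Co j)}"
  using assms(1)
  by (cases rule: chain_edgesE) (use assms(2,3) in \<open>auto simp: chain_stage_def chain_conn_stage_def\<close>)

lemma chain_edge_in_final_stage:
  assumes "(b, c) \<in> chain_edges" "chain_stage b = 4" "chain_conn_stage c = 4"
  shows "(b, c) \<in> map_prod (CB 4) (CC 4) ` perp_edges"
  using assms(1)
  by (cases rule: chain_edgesE) (use assms(2,3) in \<open>auto simp: chain_stage_def chain_conn_stage_def\<close>)

lemma chain_part2_grid_layout:
  "grid_layout {b \<in> chain_buses. chain_part b = 2} {c \<in> chain_conns. chain_conn_part c = 2}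
    {(b, c) \<in> chain_edges. chain_part b = 2 \<and> chain_conn_part c = 2}
    (\<lambda>b. fst (chain_bus up b)) (\<lambda>b. snd (chain_bus up b)) (chain_conn up)"
proof (rule grid_layout_by_regions[where regB = chain_stage and regC = chain_conn_stage
      and Rs = "{2, 3, 4}" and frame = stage_frame])
  let ?E = "{(b, c) \<in> chain_edges. chain_part b = 2 \<and> chain_conn_part c = 2}"
  have cross: "(b, c) = (CB 3 PB, Co 2) \<or> (b, c) = (CB 4 PA, Co 3)"
    if "(b, c) \<in> ?E" "chain_stage b \<noteq> chain_conn_stage c" for b c
  proof -
    from that(1) have "(b, c) \<in> chain_edges" "chain_conn_part c = 2" by auto
    from this(1) show ?thesis
      by (cases rule: chain_edgesE)
        (use that(2) \<open>chain_conn_part c = 2\<close> in \<open>auto simp: chain_stage_def chain_conn_stage_def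
          chain_conn_part_def\<close>)
  qed
  show "?E \<subseteq> {b \<in> chain_buses. chain_part b = 2} \<times> {c \<in> chain_conns. chain_conn_part c = 2}"
    using chain_edges_subset by blast
  show "chain_stage ` {b \<in> chain_buses. chain_part b = 2} \<subseteq> {2, 3, 4}"
    "chain_conn_stage ` {c \<in> chain_conns. chain_conn_part c = 2} \<subseteq> {2, 3, 4}"
    by (auto simp: chain_buses_def chain_conns_def chain_part_def chain_conn_part_def chain_stage_def
        chain_conn_stage_def)
  show "\<not> rects_meet (stage_frame r) (stage_frame r')" if "r \<in> {2, 3, 4}" "r' \<in> {2, 3, 4}" "r \<noteq> r'" for r r'
    using that by (auto simp: stage_frame_def flipper_frame_def final_perp_frame_def stage_tr_def
        stage_dx_def stage_dy_def rects_meet_def)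
  show "layout_within {b \<in> {b \<in> chain_buses. chain_part b = 2}. chain_stage b = r}
      {c \<in> {c \<in> chain_conns. chain_conn_part c = 2}. chain_conn_stage c = r}
      {(b, c) \<in> ?E. chain_stage b = r \<and> chain_conn_stage c = r}
      (\<lambda>b. fst (chain_bus up b)) (\<lambda>b. snd (chain_bus up b)) (chain_conn up) (stage_frame r)"
    if r: "r \<in> {2, 3, 4}" for r
  proof (cases "r = 4")
    case True
    then have frame: "stage_frame r = final_perp_frame" by (simp add: stage_frame_def)
    show ?thesis unfolding frame
    proof (rule layout_within_mono[OF chain_final_layout])
      show "{(b, c) \<in> ?E. chain_stage b = r \<and> chain_conn_stage c = r} \<subseteq> map_prod (CB 4) (CC 4) ` perp_edges"
        using chain_edge_in_final_stage True by auto
    qed (use True in \<open>auto simp: chain_buses_def chain_conns_def chain_stage_def chain_conn_stage_def\<close>)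
  next
    case False
    then have "r \<in> {1, 2, 3}" using r by auto
    from False have frame:
      "stage_frame r = tr_rect (stage_tr r) (shift_rect (stage_dx r) (stage_dy r) flipper_frame)"
      by (simp add: stage_frame_def)
    show ?thesis unfolding frame
    proof (rule layout_within_mono[OF chain_stage_layout[OF \<open>r \<in> {1, 2, 3}\<close>]])
      show "{(b, c) \<in> ?E. chain_stage b = r \<and> chain_conn_stage c = r}
          \<subseteq> map_prod (CB r) (CC r) ` perp_edges \<union> {(CB r PB, Co r), (CB r PB', Co r)}"
        using chain_edge_in_stage by blast
    qed (auto simp: chain_buses_def chain_conns_def chain_stage_def chain_conn_stage_def)
  qed
  let ?Bs = "{b \<in> chain_buses. chain_part b = 2}" and ?Cs = "{c \<in> chain_conns. chain_conn_part c = 2}"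
  let ?e = "\<lambda>b c. edge_rect (fst (chain_bus up b)) (snd (chain_bus up b)) (chain_conn up c)"
  have link: "attaches (fst (chain_bus up b)) (snd (chain_bus up b)) (chain_conn up c) \<and>
      (\<forall>b'\<in>?Bs. b' \<noteq> b \<longrightarrow> \<not> rects_meet (?e b c) (snd (chain_bus up b'))) \<and>
      (\<forall>c'\<in>?Cs. c' \<noteq> c \<longrightarrow> \<not> in_rect (chain_conn up c') (?e b c)) \<and>
      (\<forall>r\<in>{2, 3, 4}. r \<notin> {chain_stage b, chain_conn_stage c} \<longrightarrow> \<not> rects_meet (?e b c) (stage_frame r))"
    if "(b, c) \<in> ?E" "chain_stage b \<noteq> chain_conn_stage c" for b c
    using cross[OF that]
    by (cases up; elim disjE; simp add: chain_part_sets ball_Un ball_range_iff all_perpB all_perpC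
        chain_bus_def chain_conn_def chain_stage_def chain_conn_stage_def stage_frame_def
        stage_tr_def stage_dx_def stage_dy_def flipper_bus_def flipper_conn_def flipper_frame_def
        final_perp_bus_def final_perp_conn_def final_perp_frame_def layout_shape_defs)
  then show "attaches (fst (chain_bus up b)) (snd (chain_bus up b)) (chain_conn up c)"
    if "(b, c) \<in> ?E" "chain_stage b \<noteq> chain_conn_stage c" for b c
    using that by blast
  from link show "\<not> rects_meet (?e b c) (snd (chain_bus up b'))"
    if "(b, c) \<in> ?E" "chain_stage b \<noteq> chain_conn_stage c" "b' \<in> ?Bs" "b' \<noteq> b" for b c b'
    using that by blast
  from link show "\<not> in_rect (chain_conn up c') (?e b c)"
    if "(b, c) \<in> ?E" "chain_stage b \<noteq> chain_conn_stage c" "c' \<in> ?Cs" "c' \<noteq> c" for b c c'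
    using that by blast
  from link show "\<not> rects_meet (?e b c) (stage_frame r)"
    if "(b, c) \<in> ?E" "chain_stage b \<noteq> chain_conn_stage c" "r \<in> {2, 3, 4}"
      "r \<notin> {chain_stage b, chain_conn_stage c}" for b c r
    using that by blast
qed

lemma chain_part_layout:
  assumes "k \<in> {1, 2}"
  shows "layout_within {b \<in> chain_buses. chain_part b = k} {c \<in> chain_conns. chain_conn_part c = k}
    {(b, c) \<in> chain_edges. chain_part b = k \<and> chain_conn_part c = k}
    (\<lambda>b. fst (chain_bus up b)) (\<lambda>b. snd (chain_bus up b)) (chain_conn up) (chain_frame k)"
proof (cases "k = 1")
  case True
  have frame: "chain_frame 1 = tr_rect (stage_tr 1) (shift_rect (stage_dx 1) (stage_dy 1) flipper_frame)"
    by (simp add: chain_frame_def stage_tr_def stage_dx_def stage_dy_def flipper_frame_def shift_rect_def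
        tr_rect_def)
  show ?thesis unfolding True frame
  proof (rule layout_within_mono[OF chain_stage_layout])
    show "{(b, c) \<in> chain_edges. chain_part b = 1 \<and> chain_conn_part c = 1}
        \<subseteq> map_prod (CB 1) (CC 1) ` perp_edges \<union> {(CB 1 PB, Co 1), (CB 1 PB', Co 1)}"
      by (auto elim!: chain_edgesE simp: chain_part_def chain_conn_part_def)
  qed (auto simp: chain_buses_def chain_conns_def chain_part_def chain_conn_part_def)
next
  case False
  with assms have k: "k = 2" by auto
  have parts: "{b \<in> chain_buses. chain_part b = 2} = range (CB 2) \<union> range (CB 3) \<union> range (CB 4)"
    "{c \<in> chain_conns. chain_conn_part c = 2} = {Co 2, Co 3} \<union> range (CC 2) \<union> range (CC 3) \<union> range (CC 4)"
    unfolding chain_buses_def chain_conns_def chain_part_def chain_conn_part_def by auto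
  show ?thesis unfolding k
  proof (rule layout_withinI[OF chain_part2_grid_layout])
    have inside: "\<forall>b\<in>{b \<in> chain_buses. chain_part b = 2}. subrect (snd (chain_bus up b)) (chain_frame 2)"
      "\<forall>c\<in>{c \<in> chain_conns. chain_conn_part c = 2}. in_rect (chain_conn up c) (chain_frame 2)"
      unfolding parts
      by (cases up; simp add: ball_Un ball_range_iff all_perpB all_perpC chain_bus_def chain_conn_def
          stage_tr_def stage_dx_def stage_dy_def flipper_bus_def flipper_conn_def final_perp_bus_def
          final_perp_conn_def chain_frame_def subrect_def in_rect_def)+
    show "subrect (snd (chain_bus up b)) (chain_frame 2)"
      if "b \<in> {b \<in> chain_buses. chain_part b = 2}" for b
      using inside(1) that by blast
    show "in_rect (chain_conn up c) (chain_frame 2)"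
      if "c \<in> {c \<in> chain_conns. chain_conn_part c = 2}" for c
      using inside(2) that by blast
    show "subrect (edge_rect (fst (chain_bus up b)) (snd (chain_bus up b)) (chain_conn up c)) (chain_frame 2)"
      if "(b, c) \<in> {(b, c) \<in> chain_edges. chain_part b = 2 \<and> chain_conn_part c = 2}" for b c
      using that
      by (cases up; auto elim!: chain_edgesE simp: perp_edges_def chain_part_def chain_bus_def
          chain_conn_def stage_tr_def stage_dx_def stage_dy_def flipper_bus_def flipper_conn_def
          final_perp_bus_def final_perp_conn_def chain_frame_def subrect_def edge_rect_def)
  qed
qed

definition chain_node :: "int \<Rightarrow> int \<Rightarrow> nat \<Rightarrow> int" where
  "chain_node ox Q k = (if k = 1 then ox else Q)"

definition chain_rect_at :: "int \<Rightarrow> int \<Rightarrow> int \<Rightarrow> bool \<Rightarrow> chB \<Rightarrow> rect" where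
  "chain_rect_at ox Q P up b = shift_rect (chain_node ox Q (chain_part b)) P (snd (chain_bus up b))"

definition chain_pt_at :: "int \<Rightarrow> int \<Rightarrow> int \<Rightarrow> bool \<Rightarrow> chC \<Rightarrow> int \<times> int" where
  "chain_pt_at ox Q P up c = shift_pt (chain_node ox Q (chain_conn_part c)) P (chain_conn up c)"

lemmas chain_shape_defs = chain_rect_at_def chain_pt_at_def chain_node_def chain_part_def
  chain_conn_part_def chain_bus_def chain_conn_def stage_tr_def stage_dx_def stage_dy_def flipper_bus_def flipper_conn_def
  final_perp_bus_def final_perp_conn_def

lemma chain_input_edge:
  assumes "y + 10 < P"
  shows "fst (chain_bus up (CB 1 PB)) \<and> attaches True (chain_rect_at ox Q P up (CB 1 PB)) (ox, y) \<and>
    edge_rect True (chain_rect_at ox Q P up (CB 1 PB)) (ox, y) = (ox, ox, y, P - 5) \<and>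
    (\<forall>b\<in>range (CB 1). b \<noteq> CB 1 PB \<longrightarrow> \<not> rects_meet (ox, ox, y, P - 5) (chain_rect_at ox Q P up b)) \<and>
    (\<forall>c\<in>insert (Co 1) (range (CC 1)). \<not> in_rect (chain_pt_at ox Q P up c) (ox, ox, y, P - 5))"
  using assms
  by (simp add: ball_Un ball_range_iff all_perpB all_perpC chain_shape_defs attaches_def edge_rect_def
      rects_meet_def in_rect_def)

lemma chain_link_edge:
  assumes "ox + 100 < Q"
  shows "\<not> fst (chain_bus up (CB 2 PB)) \<and>
    attaches False (chain_rect_at ox Q P up (CB 2 PB)) (chain_pt_at ox Q P up (Co 1)) \<and>
    edge_rect False (chain_rect_at ox Q P up (CB 2 PB)) (chain_pt_at ox Q P up (Co 1)) = (ox + 1, Q - 45, P, P) \<and>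
    (\<forall>b\<in>chain_buses. b \<noteq> CB 2 PB \<longrightarrow> \<not> rects_meet (ox + 1, Q - 45, P, P) (chain_rect_at ox Q P up b)) \<and>
    (\<forall>c\<in>chain_conns. c \<noteq> Co 1 \<longrightarrow> \<not> in_rect (chain_pt_at ox Q P up c) (ox + 1, Q - 45, P, P))"
  using assms
  by (cases up; simp add: chain_buses_def chain_conns_def ball_Un ball_range_iff all_perpB all_perpC chain_shape_defs
      attaches_def edge_rect_def rects_meet_def in_rect_def)

lemma chain_output_edge:
  assumes "up \<Longrightarrow> P + 30 < Q" "\<not> up \<Longrightarrow> Q + 30 < P"
  defines "e \<equiv> if up then (Q, Q, P + 22, Q) else (Q, Q, Q, P + 18)"
  shows "fst (chain_bus up (CB 4 PB)) \<and> attaches True (chain_rect_at ox Q P up (CB 4 PB)) (Q, Q) \<and>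
    edge_rect True (chain_rect_at ox Q P up (CB 4 PB)) (Q, Q) = e \<and>
    (\<forall>b\<in>range (CB 2) \<union> range (CB 3) \<union> range (CB 4). b \<noteq> CB 4 PB \<longrightarrow>
       \<not> rects_meet e (chain_rect_at ox Q P up b)) \<and>
    (\<forall>c\<in>{Co 2, Co 3} \<union> range (CC 2) \<union> range (CC 3) \<union> range (CC 4). \<not> in_rect (chain_pt_at ox Q P up c) e)"
  using assms
  by (cases up; simp add: ball_Un ball_range_iff all_perpB all_perpC chain_shape_defs attaches_def edge_rect_def
      rects_meet_def in_rect_def)

text \<open>The connector o^r of the A-side (s = True) lies in column 100 r and row 5 + r, so that the
  edges from all of them can leave the drawing upwards.  The B-side is arranged in the same way with
  rows and columns exchanged and shifted down by D; its edges leave the drawing to the right.\<close>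

definition vbox_bus :: "nat \<Rightarrow> nat \<Rightarrow> vbB \<Rightarrow> bool \<times> rect" where
  "vbox_bus k l b = (let D = 100 * (int l + 1) + 5; W = 100 * (int k + 1) in
    case b of
      VP r \<Rightarrow> (case r of PA \<Rightarrow> (True, (1, 4, 0, 0)) | PA' \<Rightarrow> (True, (1, 4, -4, -4))
          | PB \<Rightarrow> (False, (0, 0, 1 - D, -1)) | PB' \<Rightarrow> (False, (3, 3, -2, -1)) | PC \<Rightarrow> (False, (5, 5, -3, -2)))
    | VR s \<Rightarrow> if s then (False, (0, 0, 1, 5 + int k)) else (True, (1, 5 + int l, -D, -D))
    | VS s \<Rightarrow> if s then (False, (W, W, 2, 5 + int k)) else (True, (2, 5 + int l, -5, -5))
    | VT s \<Rightarrow> if s then (False, (3, 3, 1, 2)) else (True, (1, 2, 3 - D, 3 - D))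
    | VU s \<Rightarrow> if s then (True, (1, 4, 5, 5)) else (False, (5, 5, 1 - D, 4 - D)))"

definition vbox_pt :: "nat \<Rightarrow> nat \<Rightarrow> vbC \<Rightarrow> int \<times> int" where
  "vbox_pt k l c = (let D = 100 * (int l + 1) + 5 in
    case c of
      VPc x \<Rightarrow> (case x of Px \<Rightarrow> (1, -1) | Py \<Rightarrow> (2, -3) | Pz \<Rightarrow> (4, -2))
    | Vx s \<Rightarrow> if s then (1, 3) else (3, 1 - D)
    | Vy s \<Rightarrow> if s then (2, 1) else (1, 2 - D)
    | Vz s \<Rightarrow> if s then (4, 2) else (2, 4 - D)
    | Vo s r \<Rightarrow> if s then (100 * int r, 5 + int r) else (5 + int r, 100 * int r - D))"

definition vbox_conns :: "nat \<Rightarrow> nat \<Rightarrow> vbC set" where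
  "vbox_conns k l = {c. case c of Vo s r \<Rightarrow> 1 \<le> r \<and> r \<le> (if s then k else l) | _ \<Rightarrow> True}"

lemma all_vbB:
  "(\<forall>b. P b) \<longleftrightarrow> (\<forall>r. P (VP r)) \<and> (\<forall>s. P (VR s)) \<and> (\<forall>s. P (VS s)) \<and> (\<forall>s. P (VT s)) \<and> (\<forall>s. P (VU s))"
  by (metis vbB.exhaust)

lemma ball_vbox_conns:
  "(\<forall>c\<in>vbox_conns k l. P c) \<longleftrightarrow> (\<forall>x. P (VPc x)) \<and> (\<forall>s. P (Vx s)) \<and> (\<forall>s. P (Vy s)) \<and>
     (\<forall>s. P (Vz s)) \<and> (\<forall>r. 1 \<le> r \<and> r \<le> k \<longrightarrow> P (Vo True r)) \<and> (\<forall>r. 1 \<le> r \<and> r \<le> l \<longrightarrow> P (Vo False r))"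
  unfolding vbox_conns_def by (auto split: vbC.splits)

lemma ball_map_prod_image: "(\<forall>(b, c)\<in>map_prod f g ` A. P b c) \<longleftrightarrow> (\<forall>(b, c)\<in>A. P (f b) (g c))"
  by auto

lemma ball_setcompr: "(\<forall>x\<in>{f i |i. Q i}. P x) \<longleftrightarrow> (\<forall>i. Q i \<longrightarrow> P (f i))"
  by auto

lemmas vbox_shape_defs = vbox_bus_def vbox_pt_def Let_def

abbreviation vbox_edge_clear :: "nat \<Rightarrow> nat \<Rightarrow> int \<Rightarrow> vbB \<Rightarrow> vbC \<Rightarrow> bool" where
  "vbox_edge_clear k l H \<equiv> edge_clear UNIV (vbox_conns k l) (\<lambda>b. fst (vbox_bus k l b))
     (\<lambda>b. snd (vbox_bus k l b)) (vbox_pt k l) (-H, H - 1, -H, H - 1)"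

lemma vbox_core_edges_clear:
  assumes "100 * (int k + int l) + 300 \<le> H"
  shows "\<forall>(r, x)\<in>perp_edges. vbox_edge_clear k l H (VP r) (VPc x)"
  using assms
  by (simp add: perp_edges_def all_vbB ball_vbox_conns all_perpB all_perpC all_bool_eq
      vbox_shape_defs layout_shape_defs)

lemma vbox_side_edges_clear:
  assumes "100 * (int k + int l) + 300 \<le> H"
  shows "\<forall>(B, c)\<in>{(vbox_base s, Vx s), (VR s, Vx s), (VS s, Vx s), (VU s, Vx s),
      (vbox_base s, Vy s), (VR s, Vy s), (VT s, Vy s), (VU s, Vy s),
      (vbox_base s, Vz s), (VS s, Vz s), (VT s, Vz s), (VU s, Vz s)}. vbox_edge_clear k l H B c"
  using assms
  by (cases s; simp add: vbox_base_def all_vbB ball_vbox_conns all_perpB all_perpC all_bool_eq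
      vbox_shape_defs layout_shape_defs)

lemma vbox_out_edges_clear:
  assumes "100 * (int k + int l) + 300 \<le> H" "1 \<le> r" "r \<le> (if s then k else l)"
  shows "vbox_edge_clear k l H (VR s) (Vo s r) \<and> vbox_edge_clear k l H (VS s) (Vo s r)"
  using assms
  by (cases s; simp add: all_vbB ball_vbox_conns all_perpB all_perpC all_bool_eq
      vbox_shape_defs layout_shape_defs)

lemma vbox_layout:
  assumes "100 * (int k + int l) + 300 \<le> H"
  shows "layout_within UNIV (vbox_conns k l) (vbox_edges k l) (\<lambda>b. fst (vbox_bus k l b))
    (\<lambda>b. snd (vbox_bus k l b)) (vbox_pt k l) (-H, H - 1, -H, H - 1)"
proof (rule layout_withinI_edge_clear)
  show "\<forall>B\<in>UNIV. bus_rect (fst (vbox_bus k l B)) (snd (vbox_bus k l B)) \<and>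
      subrect (snd (vbox_bus k l B)) (-H, H - 1, -H, H - 1)"
    using assms by (simp add: all_vbB all_perpB all_bool_eq vbox_shape_defs bus_rect_def subrect_def)
  show "\<forall>c\<in>vbox_conns k l. in_rect (vbox_pt k l c) (- H, H - 1, - H, H - 1)"
    using assms by (simp add: ball_vbox_conns all_perpC all_bool_eq vbox_shape_defs in_rect_def)
  show "\<forall>B\<in>UNIV. \<forall>B'\<in>UNIV. B \<noteq> B' \<longrightarrow> \<not> rects_meet (snd (vbox_bus k l B)) (snd (vbox_bus k l B'))"
    by (simp add: all_vbB all_perpB all_bool_eq vbox_shape_defs rects_meet_def)
  show "\<forall>c\<in>vbox_conns k l. \<forall>c'\<in>vbox_conns k l. c \<noteq> c' \<longrightarrow> vbox_pt k l c \<noteq> vbox_pt k l c'"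
    by (simp add: ball_vbox_conns all_perpC all_bool_eq vbox_shape_defs)
  show "\<forall>B\<in>UNIV. \<forall>c\<in>vbox_conns k l. \<not> in_rect (vbox_pt k l c) (snd (vbox_bus k l B))"
    by (simp add: all_vbB ball_vbox_conns all_perpB all_perpC all_bool_eq vbox_shape_defs in_rect_def)
  show "\<forall>(B, c)\<in>vbox_edges k l. vbox_edge_clear k l H B c"
    unfolding vbox_edges_def ball_Un ball_map_prod_image ball_setcompr
    using vbox_core_edges_clear[OF assms] vbox_side_edges_clear[OF assms] vbox_out_edges_clear[OF assms]
    by auto
qed

lemma vbox_exit_corridor:
  assumes "100 * (int k + int l) + 300 \<le> H" "H \<le> Y" "1 \<le> r" "r \<le> (if s then k else l)"
  shows "\<forall>b. \<not> rects_meet (fst (tr_pt s (vbox_pt k l (Vo s r))), fst (tr_pt s (vbox_pt k l (Vo s r))),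
      snd (tr_pt s (vbox_pt k l (Vo s r))), Y) (tr_rect s (snd (vbox_bus k l b)))"
    and "\<forall>c\<in>vbox_conns k l. c \<noteq> Vo s r \<longrightarrow> \<not> in_rect (tr_pt s (vbox_pt k l c))
      (fst (tr_pt s (vbox_pt k l (Vo s r))), fst (tr_pt s (vbox_pt k l (Vo s r))),
       snd (tr_pt s (vbox_pt k l (Vo s r))), Y)"
  using assms
  by (cases s; simp add: all_vbB ball_vbox_conns all_perpB all_perpC all_bool_eq vbox_shape_defs
      tr_rect_def tr_pt_def rects_meet_def in_rect_def; linarith?)+

section \<open>A layout for a not-all-equal assignment\<close>

datatype region = Var nat | Chain nat nat nat | Clause nat

text \<open>Variable box i is drawn in a square on the diagonal, transposed if x_i is false, so that its
  bus A is horizontal iff x_i is true.  Beyond all these squares, the chain of literal s of clause q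
  runs in its own horizontal strip at height row q s, transposed if the literal is false: it starts
  at the column of its connector o in the variable box and ends at the connector of the clause,
  which lies on the diagonal and hence is fixed by the transposition.  So c_q is reached vertically by
  the chains of true literals and horizontally by those of false literals; of two literals with the
  same value the first one is attached from below and the second one from above.\<close>

locale nae_assignment =
  fixes n :: nat and cls :: "(nat \<times> bool) list list" and a :: "nat \<Rightarrow> bool"
  assumes wf: "\<forall>C\<in>set cls. length C = 3 \<and> (\<forall>l\<in>set C. fst l < n)"
    and nae: "\<forall>C\<in>set cls. (\<exists>l\<in>set C. lit_val a l) \<and> (\<exists>l\<in>set C. \<not> lit_val a l)"
begin

definition radius :: int where "radius = 200 * (int (length (concat cls)) + 2)"
definition center :: "nat \<Rightarrow> int" where "center i = (2 * int i + 1) * radius"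
definition top :: int where "top = 2 * int n * radius"

abbreviation vbox_bus_of :: "nat \<Rightarrow> vbB \<Rightarrow> bool \<times> rect" where
  "vbox_bus_of i \<equiv> vbox_bus (occ_total cls (i, True)) (occ_total cls (i, False))"
abbreviation vbox_pt_of :: "nat \<Rightarrow> vbC \<Rightarrow> int \<times> int" where
  "vbox_pt_of i \<equiv> vbox_pt (occ_total cls (i, True)) (occ_total cls (i, False))"
abbreviation vbox_conns_of :: "nat \<Rightarrow> vbC set" where
  "vbox_conns_of i \<equiv> vbox_conns (occ_total cls (i, True)) (occ_total cls (i, False))"

definition lit_true :: "nat \<Rightarrow> nat \<Rightarrow> bool" where "lit_true q s = lit_val a (cls ! q ! s)"

definition repeated :: "nat \<Rightarrow> nat \<Rightarrow> bool" where
  "repeated q s \<longleftrightarrow> (\<exists>s'<s. lit_true q s' = lit_true q s)"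

text \<open>Measured in units of 100 above top, clause q owns the strips 7q + 1, ..., 7q + 7: its
  connector lies in strip 7q + 4, the chains of the literals with a new value below it and those
  of the repeated value above it.\<close>

definition row :: "nat \<Rightarrow> nat \<Rightarrow> int" where
  "row q s = top + 100 * int (7 * q + s + (if repeated q s then 4 else 0) + 1)"

definition clause_pos :: "nat \<Rightarrow> int" where "clause_pos q = top + 100 * int (7 * q + 4)"

text \<open>The connector o of the literal, in the (possibly transposed) coordinates of its chain.\<close>

definition occ_pt :: "nat \<Rightarrow> nat \<Rightarrow> int \<times> int" where
  "occ_pt q s = (case cls ! q ! s of (i, p) \<Rightarrow>
     shift_pt (center i) (center i) (tr_pt p (vbox_pt_of i (Vo p (occ_num cls q s)))))"

definition column :: "nat \<Rightarrow> nat \<Rightarrow> int" where "column q s = fst (occ_pt q s)"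

abbreviation chain_rect :: "nat \<Rightarrow> nat \<Rightarrow> chB \<Rightarrow> rect" where
  "chain_rect q s \<equiv> chain_rect_at (column q s) (clause_pos q) (row q s) (\<not> repeated q s)"
abbreviation chain_pt :: "nat \<Rightarrow> nat \<Rightarrow> chC \<Rightarrow> int \<times> int" where
  "chain_pt q s \<equiv> chain_pt_at (column q s) (clause_pos q) (row q s) (\<not> repeated q s)"

fun hor_of :: "gB \<Rightarrow> bool" where
  "hor_of (VarB i b) = (fst (vbox_bus_of i b) = a i)"
| "hor_of (ChB q s b) = (fst (chain_bus (\<not> repeated q s) b) = lit_true q s)"

fun rect_of :: "gB \<Rightarrow> rect" where
  "rect_of (VarB i b) = tr_rect (a i) (shift_rect (center i) (center i) (snd (vbox_bus_of i b)))"
| "rect_of (ChB q s b) = tr_rect (lit_true q s) (chain_rect q s b)"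

fun pt_of :: "gC \<Rightarrow> int \<times> int" where
  "pt_of (VarC i c) = tr_pt (a i) (shift_pt (center i) (center i) (vbox_pt_of i c))"
| "pt_of (ChC q s c) = tr_pt (lit_true q s) (chain_pt q s c)"
| "pt_of (ClC q) = (clause_pos q, clause_pos q)"

fun bus_region :: "gB \<Rightarrow> region" where
  "bus_region (VarB i b) = Var i"
| "bus_region (ChB q s b) = Chain q s (chain_part b)"

fun conn_region :: "gC \<Rightarrow> region" where
  "conn_region (VarC i c) = Var i"
| "conn_region (ChC q s c) = Chain q s (chain_conn_part c)"
| "conn_region (ClC q) = Clause q"

definition regions :: "region set" where
  "regions = Var ` {..<n} \<union> {Chain q s k |q s k. q < length cls \<and> s < 3 \<and> k \<in> {1, 2}} \<union>
     Clause ` {..<length cls}"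

fun frame :: "region \<Rightarrow> rect" where
  "frame (Var i) = (center i - radius, center i + radius - 1, center i - radius, center i + radius - 1)"
| "frame (Chain q s k) =
     tr_rect (lit_true q s) (shift_rect (chain_node (column q s) (clause_pos q) k) (row q s) (chain_frame k))"
| "frame (Clause q) = (clause_pos q, clause_pos q, clause_pos q, clause_pos q)"

lemma clause_length: "q < length cls \<Longrightarrow> length (cls ! q) = 3"
  using wf by auto

lemma lit_var_less: "q < length cls \<Longrightarrow> s < 3 \<Longrightarrow> fst (cls ! q ! s) < n"
  using wf clause_length by (metis nth_mem)

lemma occ_num_range:
  "q < length cls \<Longrightarrow> s < 3 \<Longrightarrow> 1 \<le> occ_num cls q s \<and> occ_num cls q s \<le> occ_total cls (cls ! q ! s)"
  using occ_num_bounds clause_length by simp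

lemma occ_total_le: "occ_total cls l \<le> length (concat cls)"
  unfolding occ_total_def by (rule count_le_length)

lemma vbox_fits: "100 * (int (occ_total cls (i, True)) + int (occ_total cls (i, False))) + 300 \<le> radius"
proof -
  have "int (occ_total cls (i, p)) \<le> int (length (concat cls))" for p
    using occ_total_le by simp
  from this[of True] this[of False] show ?thesis unfolding radius_def distrib_left by linarith
qed

lemma radius_pos: "0 < radius" unfolding radius_def by simp

lemma square_below_top: "i < n \<Longrightarrow> center i + radius \<le> top"
proof -
  assume "i < n"
  then have "(2 * int i + 2) * radius \<le> 2 * int n * radius" using radius_pos by (intro mult_right_mono) auto
  then show ?thesis unfolding center_def top_def by (simp add: algebra_simps)
qed

lemma squares_apart: "i < j \<Longrightarrow> center i + radius \<le> center j - radius"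
proof -
  assume "i < j"
  then have "(2 * int i + 2) * radius \<le> 2 * int j * radius" using radius_pos by (intro mult_right_mono) auto
  then show ?thesis unfolding center_def by (simp add: algebra_simps)
qed

lemma square_nonneg: "0 \<le> center i - radius"
  unfolding center_def using radius_pos by simp

lemma occ_pt_in_square:
  assumes "q < length cls" "s < 3"
  defines "i \<equiv> fst (cls ! q ! s)"
  shows "center i - radius + 20 \<le> column q s \<and> column q s + 20 \<le> center i + radius \<and>
    snd (occ_pt q s) = center i + 5 + int (occ_num cls q s) \<and> snd (occ_pt q s) + 20 \<le> center i + radius"
  using occ_num_range[OF assms(1,2)] occ_total_le[of "cls ! q ! s"]
    occ_total_le[of "(fst (cls ! q ! s), False)"]
  unfolding column_def occ_pt_def i_def radius_def
  by (cases "cls ! q ! s"; cases "snd (cls ! q ! s)") (auto simp: vbox_pt_def)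

lemma row_above_top: "top + 100 \<le> row q s"
  unfolding row_def by simp

lemma clause_above_top: "top + 400 \<le> clause_pos q"
  unfolding clause_pos_def by simp

lemma rows_apart:
  assumes "s < 3" "s' < 3" "(q, s) \<noteq> (q', s')"
  shows "row q s + 100 \<le> row q' s' \<or> row q' s' + 100 \<le> row q s"
proof -
  have "7 * q + s + (if repeated q s then 4 else 0) \<noteq> 7 * q' + s' + (if repeated q' s' then 4 else 0)"
    using assms by (auto split: if_splits; presburger)
  then show ?thesis unfolding row_def by auto
qed

lemma row_clause_apart: "s < 3 \<Longrightarrow> row q s + 100 \<le> clause_pos q' \<or> clause_pos q' + 100 \<le> row q s"
proof -
  assume "s < 3"
  then have "7 * q + s + (if repeated q s then 4 else 0) + 1 \<noteq> 7 * q' + 4"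
    by (auto split: if_splits; presburger)
  then show ?thesis unfolding row_def clause_pos_def by auto
qed

lemma row_side:
  "s < 3 \<Longrightarrow> (\<not> repeated q s \<longrightarrow> row q s + 100 \<le> clause_pos q) \<and>
    (repeated q s \<longrightarrow> clause_pos q + 100 \<le> row q s)"
  unfolding row_def clause_pos_def by auto

lemma clauses_apart: "q \<noteq> q' \<Longrightarrow> clause_pos q + 100 \<le> clause_pos q' \<or> clause_pos q' + 100 \<le> clause_pos q"
  unfolding clause_pos_def by auto

lemma lit_true_iff: "lit_true q s \<longleftrightarrow> a (fst (cls ! q ! s)) = snd (cls ! q ! s)"
  unfolding lit_true_def lit_val_def ..

lemma columns_apart:
  assumes "q < length cls" "s < 3" "q' < length cls" "s' < 3" "(q, s) \<noteq> (q', s')"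
    and "lit_true q s = lit_true q' s'"
  shows "column q s + 20 \<le> column q' s' \<or> column q' s' + 20 \<le> column q s"
proof (cases "fst (cls ! q ! s) = fst (cls ! q' ! s')")
  case True
  with assms(6) have "cls ! q ! s = cls ! q' ! s'" by (auto simp: lit_true_iff prod_eq_iff)
  then have "occ_num cls q s \<noteq> occ_num cls q' s'"
    using occ_num_inj assms(1-5) clause_length by simp
  then show ?thesis
    using True \<open>cls ! q ! s = cls ! q' ! s'\<close>
    unfolding column_def occ_pt_def by (cases "cls ! q' ! s'") (auto simp: vbox_pt_def)
next
  case False
  then consider "fst (cls ! q ! s) < fst (cls ! q' ! s')" | "fst (cls ! q' ! s') < fst (cls ! q ! s)" by linarith
  then show ?thesis
    using squares_apart occ_pt_in_square[OF assms(1,2)] occ_pt_in_square[OF assms(3,4)] by cases force+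
qed

text \<open>The only use of the not-all-equal property of the assignment.\<close>

lemma repeated_differs:
  assumes "q < length cls" "s < 3" "s' < 3" "s \<noteq> s'" "lit_true q s = lit_true q s'"
  shows "repeated q s \<noteq> repeated q s'"
proof -
  have "set (cls ! q) = {cls ! q ! 0, cls ! q ! 1, cls ! q ! 2}"
    using clause_length[OF assms(1)] by (auto simp: set_conv_nth less_Suc_eq numeral_eq_Suc)
  moreover have "(\<exists>l\<in>set (cls ! q). lit_val a l) \<and> (\<exists>l\<in>set (cls ! q). \<not> lit_val a l)"
    using nae assms(1) by simp
  ultimately have "\<not> (lit_true q 0 = lit_true q 1 \<and> lit_true q 1 = lit_true q 2)"
    unfolding lit_true_def by auto
  then show ?thesis using assms(2-5) unfolding repeated_def by (auto simp: less_Suc_eq numeral_eq_Suc)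
qed

lemma pt_of_occ_conn:
  assumes "q < length cls" "s < 3"
  shows "pt_of (VarC (fst (cls ! q ! s)) (Vo (snd (cls ! q ! s)) (occ_num cls q s))) =
    tr_pt (lit_true q s) (occ_pt q s)"
  unfolding occ_pt_def lit_true_iff
  by (cases "cls ! q ! s"; cases "a (fst (cls ! q ! s))") (auto simp: tr_pt_def shift_pt_def)

lemma column_below_top: "q < length cls \<Longrightarrow> s < 3 \<Longrightarrow> 20 \<le> column q s \<and> column q s + 20 \<le> top"
  using occ_pt_in_square[of q s] square_below_top[OF lit_var_less] square_nonneg[of "fst (cls ! q ! s)"]
  by fastforce


lemma rects_meet_tr_tr: "rects_meet (tr_rect t X) (tr_rect t' Y) \<longleftrightarrow> rects_meet X (tr_rect (t = t') Y)"
  by (cases t; cases t') (auto simp: rects_meet_def)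

lemma rects_meet_sym: "rects_meet X Y \<longleftrightarrow> rects_meet Y X"
  unfolding rects_meet_def by auto

lemma chain_frame_eqs:
  "frame (Chain q s 1) = tr_rect (lit_true q s) (column q s - 6, column q s + 1, row q s - 5, row q s + 1)"
  "frame (Chain q s 2) = tr_rect (lit_true q s) (clause_pos q - 46, clause_pos q + 3, row q s - 6, row q s + 24)"
  by (simp_all add: chain_frame_def chain_node_def flipper_frame_def shift_rect_def add.commute)

lemma regionsE:
  assumes "r \<in> regions"
  obtains (var) i where "i < n" "r = Var i"
  | (chain1) q s where "q < length cls" "s < 3" "r = Chain q s 1"
  | (chain2) q s where "q < length cls" "s < 3" "r = Chain q s 2"
  | (clause) q where "q < length cls" "r = Clause q"
  using assms unfolding regions_def by auto

lemma frame_var_apart: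
  assumes "i < n" "r \<in> regions" "r \<noteq> Var i"
  shows "\<not> rects_meet (frame (Var i)) (frame r)"
  using assms(2)
proof (cases rule: regionsE)
  case (var j)
  then have "i < j \<or> j < i" using assms by auto
  then show ?thesis using squares_apart[of i j] squares_apart[of j i] var by (auto simp: rects_meet_def)
next
  case (chain1 q s)
  then show ?thesis
    using square_below_top[OF assms(1)] row_above_top[of q s]
    unfolding chain1(3) chain_frame_eqs by (auto simp: rects_meet_def)
next
  case (chain2 q s)
  then show ?thesis
    using square_below_top[OF assms(1)] row_above_top[of q s] clause_above_top[of q]
    unfolding chain2(3) chain_frame_eqs by (auto simp: rects_meet_def)
next
  case (clause q)
  then show ?thesis
    using square_below_top[OF assms(1)] clause_above_top[of q] by (auto simp: rects_meet_def)
qed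

lemma frame_clause_apart:
  assumes "q < length cls" "r \<in> regions" "r \<noteq> Clause q" "\<And>i. r \<noteq> Var i"
  shows "\<not> rects_meet (frame (Clause q)) (frame r)"
  using assms(2)
proof (cases rule: regionsE)
  case (chain1 q' s')
  then show ?thesis using column_below_top[of q' s'] row_above_top[of q' s'] clause_above_top[of q]
    unfolding chain1(3) chain_frame_eqs by (auto simp: rects_meet_def)
next
  case (chain2 q' s')
  then show ?thesis using row_clause_apart[of s' q' q]
    unfolding chain2(3) chain_frame_eqs by (auto simp: rects_meet_def)
next
  case (clause q')
  then show ?thesis using clauses_apart[of q q'] assms(3) by (auto simp: rects_meet_def)
qed (use assms(4) in blast)

lemma frame_chain_apart:
  assumes qs: "q < length cls" "s < 3" and qs': "q' < length cls" "s' < 3" and k: "k \<in> {1, 2}" "k' \<in> {1, 2}"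
    and ne: "Chain q s k \<noteq> Chain q' s' k'"
  shows "\<not> rects_meet (frame (Chain q s k)) (frame (Chain q' s' k'))"
proof -
  have rows: "row q s + 100 \<le> row q' s' \<or> row q' s' + 100 \<le> row q s" if "(q, s) \<noteq> (q', s')"
    using rows_apart qs(2) qs'(2) that by blast
  note col = column_below_top[OF qs] column_below_top[OF qs']
  note top = row_above_top[of q s] row_above_top[of q' s'] clause_above_top[of q] clause_above_top[of q']
  from k consider "k = 1" "k' = 1" | "k = 1" "k' = 2" | "k = 2" "k' = 1" | "k = 2" "k' = 2"
    by auto
  then show ?thesis
  proof cases
    case 1
    with ne have "(q, s) \<noteq> (q', s')" by auto
    then show ?thesis unfolding 1 chain_frame_eqs rects_meet_tr_tr
      using rows col top by (cases "lit_true q s = lit_true q' s'") (auto simp: rects_meet_def)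
  next
    case 2
    then show ?thesis unfolding 2 chain_frame_eqs rects_meet_tr_tr
      using col top by (cases "lit_true q s = lit_true q' s'") (auto simp: rects_meet_def)
  next
    case 3
    then show ?thesis unfolding 3 chain_frame_eqs rects_meet_tr_tr
      using col top by (cases "lit_true q s = lit_true q' s'") (auto simp: rects_meet_def)
  next
    case 4
    with ne have "(q, s) \<noteq> (q', s')" by auto
    then show ?thesis unfolding 4 chain_frame_eqs rects_meet_tr_tr
      using rows row_clause_apart[OF qs'(2), of q' q] top
      by (cases "lit_true q s = lit_true q' s'") (auto simp: rects_meet_def)
  qed
qed

lemma frames_disjoint:
  assumes "r \<in> regions" "r' \<in> regions" "r \<noteq> r'"
  shows "\<not> rects_meet (frame r) (frame r')"
proof -
  have chain: "\<not> rects_meet (frame (Chain q s k)) (frame r'')"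
    if "q < length cls" "s < 3" "k \<in> {1, 2}" "r'' \<in> regions" "r'' \<noteq> Chain q s k" "\<And>i. r'' \<noteq> Var i"
      "\<And>q. r'' \<noteq> Clause q" for q s k r''
    using that(4)
    by (cases rule: regionsE) (use that frame_chain_apart in \<open>force+\<close>)
  show ?thesis
    using assms(1)
  proof (cases rule: regionsE)
    case (var i)
    then show ?thesis using frame_var_apart assms by blast
  next
    case (clause q)
    from assms(2) show ?thesis
    proof (cases rule: regionsE)
      case (var i)
      then show ?thesis using frame_var_apart[of i r] assms rects_meet_sym by metis
    qed (use frame_clause_apart clause assms in blast)+
  next
    case (chain1 q s)
    from assms(2) show ?thesis
    proof (cases rule: regionsE)
      case (var i)
      then show ?thesis using frame_var_apart[of i r] assms rects_meet_sym by metis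
    next
      case (clause q')
      then show ?thesis using frame_clause_apart[of q' r] assms chain1 rects_meet_sym by auto
    qed (use chain[of q s 1 r'] chain1 assms in auto)
  next
    case (chain2 q s)
    from assms(2) show ?thesis
    proof (cases rule: regionsE)
      case (var i)
      then show ?thesis using frame_var_apart[of i r] assms rects_meet_sym by metis
    next
      case (clause q')
      then show ?thesis using frame_clause_apart[of q' r] assms chain2 rects_meet_sym by auto
    qed (use chain[of q s 2 r'] chain2 assms in auto)
  qed
qed


abbreviation E :: "(gB \<times> gC) set" where "E \<equiv> nae_bus_edges n cls"

lemma vbox_edges_conns: "(b, x) \<in> vbox_edges k l \<Longrightarrow> x \<in> vbox_conns k l"
  by (auto simp: vbox_edges_def vbox_conns_def split: vbC.split)

lemma nae_busE:
  assumes "B \<in> fst ` E"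
  obtains (var) i b where "i < n" "B = VarB i b"
  | (chain) q s b where "q < length cls" "s < 3" "b \<in> chain_buses" "B = ChB q s b"
proof -
  obtain c where "(B, c) \<in> E" using assms by force
  then show ?thesis
    by (cases rule: nae_bus_edgesE) (use that chain_edges_subset in \<open>auto simp: chain_buses_def\<close>)
qed

lemma nae_connE:
  assumes "c \<in> snd ` E"
  obtains (var) i x where "i < n" "x \<in> vbox_conns_of i" "c = VarC i x"
  | (chain) q s x where "q < length cls" "s < 3" "x \<in> chain_conns" "c = ChC q s x"
  | (clause) q where "q < length cls" "c = ClC q"
proof -
  obtain B where "(B, c) \<in> E" using assms by force
  then show ?thesis
  proof (cases rule: nae_bus_edgesE)
    case (vbox i b x)
    then have "x \<in> vbox_conns_of i" by (simp add: vbox_edges_conns)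
    then show ?thesis using that vbox by blast
  next
    case (chain q s b x)
    then show ?thesis using that chain_edges_subset by blast
  next
    case (literal q s)
    obtain i p where l: "cls ! q ! s = (i, p)" by fastforce
    have "Vo p (occ_num cls q s) \<in> vbox_conns_of i"
      using occ_num_range[OF literal(1,2)] l by (cases p) (auto simp: vbox_conns_def)
    then show ?thesis using that literal l lit_var_less[OF literal(1,2)] by auto
  qed (use that in blast)
qed

lemma bus_region_in_regions: "B \<in> fst ` E \<Longrightarrow> bus_region B \<in> regions"
  by (erule nae_busE) (auto simp: regions_def chain_part_def split: chB.splits)

lemma conn_region_in_regions: "c \<in> snd ` E \<Longrightarrow> conn_region c \<in> regions"
  by (erule nae_connE) (auto simp: regions_def chain_conn_part_def split: chC.splits)

lemma var_region_layout:
  assumes "i < n"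
  shows "layout_within {B \<in> fst ` E. bus_region B = Var i} {c \<in> snd ` E. conn_region c = Var i}
    {(B, c) \<in> E. bus_region B = Var i \<and> conn_region c = Var i} hor_of rect_of pt_of (frame (Var i))"
proof (rule layout_within_mono)
  let ?k = "occ_total cls (i, True)" and ?l = "occ_total cls (i, False)"
  have frame: "frame (Var i) =
      tr_rect (a i) (shift_rect (center i) (center i) (- radius, radius - 1, - radius, radius - 1))"
    by (simp add: tr_rect_def shift_rect_def)
  show "layout_within (range (VarB i)) (VarC i ` vbox_conns_of i)
      (map_prod (VarB i) (VarC i) ` vbox_edges ?k ?l) hor_of rect_of pt_of (frame (Var i))"
    unfolding frame
    by (rule layout_within_rename[OF layout_within_place[OF vbox_layout[OF vbox_fits]]])
      (auto dest: vbox_edges_conns)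
  have "B \<in> range (VarB i)" if "bus_region B = Var i" for B
    using that by (cases B) auto
  then show "{B \<in> fst ` E. bus_region B = Var i} \<subseteq> range (VarB i)" by blast
  have "c \<in> VarC i ` vbox_conns_of i" if "c \<in> snd ` E" "conn_region c = Var i" for c
    using that(1) by (cases rule: nae_connE) (use that(2) in auto)
  then show "{c \<in> snd ` E. conn_region c = Var i} \<subseteq> VarC i ` vbox_conns_of i" by blast
  have "(B, c) \<in> map_prod (VarB i) (VarC i) ` vbox_edges ?k ?l"
    if "(B, c) \<in> E" "bus_region B = Var i" "conn_region c = Var i" for B c
    using that(1) by (cases rule: nae_bus_edgesE) (use that(2,3) in auto)
  then show "{(B, c) \<in> E. bus_region B = Var i \<and> conn_region c = Var i} \<subseteq>
      map_prod (VarB i) (VarC i) ` vbox_edges ?k ?l" by blast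
qed

lemma chain_region_layout:
  assumes "k \<in> {1, 2}"
  shows "layout_within {B \<in> fst ` E. bus_region B = Chain q s k} {c \<in> snd ` E. conn_region c = Chain q s k}
    {(B, c) \<in> E. bus_region B = Chain q s k \<and> conn_region c = Chain q s k} hor_of rect_of pt_of
    (frame (Chain q s k))"
proof (rule layout_within_mono)
  show "layout_within (ChB q s ` {b \<in> chain_buses. chain_part b = k})
      (ChC q s ` {c \<in> chain_conns. chain_conn_part c = k})
      (map_prod (ChB q s) (ChC q s) ` {(b, c) \<in> chain_edges. chain_part b = k \<and> chain_conn_part c = k})
      hor_of rect_of pt_of (frame (Chain q s k))"
    unfolding frame.simps
    by (rule layout_within_rename[OF layout_within_place[OF chain_part_layout[OF assms]]])
      (use chain_edges_subset in \<open>auto simp: chain_rect_at_def chain_pt_at_def\<close>)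
  have "B \<in> ChB q s ` {b \<in> chain_buses. chain_part b = k}" if "B \<in> fst ` E" "bus_region B = Chain q s k" for B
    using that(1) by (cases rule: nae_busE) (use that(2) in auto)
  then show "{B \<in> fst ` E. bus_region B = Chain q s k} \<subseteq> ChB q s ` {b \<in> chain_buses. chain_part b = k}"
    by blast
  have "c \<in> ChC q s ` {c \<in> chain_conns. chain_conn_part c = k}"
    if "c \<in> snd ` E" "conn_region c = Chain q s k" for c
    using that(1) by (cases rule: nae_connE) (use that(2) in auto)
  then show "{c \<in> snd ` E. conn_region c = Chain q s k} \<subseteq> ChC q s ` {c \<in> chain_conns. chain_conn_part c = k}"
    by blast
  have "(B, c) \<in> map_prod (ChB q s) (ChC q s) ` {(b, c) \<in> chain_edges. chain_part b = k \<and> chain_conn_part c = k}"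
    if "(B, c) \<in> E" "bus_region B = Chain q s k" "conn_region c = Chain q s k" for B c
    using that(1) by (cases rule: nae_bus_edgesE) (use that(2,3) in \<open>auto simp: chain_part_def chain_conn_part_def\<close>)
  then show "{(B, c) \<in> E. bus_region B = Chain q s k \<and> conn_region c = Chain q s k} \<subseteq>
      map_prod (ChB q s) (ChC q s) ` {(b, c) \<in> chain_edges. chain_part b = k \<and> chain_conn_part c = k}"
    by blast
qed

lemma clause_region_layout:
  "layout_within {B \<in> fst ` E. bus_region B = Clause q} {c \<in> snd ` E. conn_region c = Clause q}
    {(B, c) \<in> E. bus_region B = Clause q \<and> conn_region c = Clause q} hor_of rect_of pt_of (frame (Clause q))"
proof -
  have "bus_region B \<noteq> Clause q" for B by (cases B) auto
  then have "{B \<in> fst ` E. bus_region B = Clause q} = {}" by auto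
  moreover have "conn_region c = Clause q \<Longrightarrow> c = ClC q" for c by (cases c) auto
  then have "{c \<in> snd ` E. conn_region c = Clause q} \<subseteq> {ClC q}" by auto
  moreover have "layout_within {} {ClC q} {} hor_of rect_of pt_of (frame (Clause q))"
    unfolding layout_within_def grid_layout_def by (simp add: in_rect_def)
  ultimately show ?thesis by (auto elim!: layout_within_mono)
qed


lemma tr_shift_diag:
  "tr_rect t (shift_rect d d R) = shift_rect d d (tr_rect t R)"
  "tr_pt t (shift_pt d d p) = shift_pt d d (tr_pt t p)"
  by (simp_all add: tr_rect_def shift_rect_def tr_pt_def shift_pt_def)

lemma in_rect_tr_tr: "in_rect (tr_pt t p) (tr_rect t' R) \<longleftrightarrow> in_rect (tr_pt (t = t') p) R"
  by (cases t; cases t') (auto simp: in_rect_def)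

lemma tr_lit_true: "(lit_true q s = a (fst (cls ! q ! s))) = snd (cls ! q ! s)"
  unfolding lit_true_iff by auto

lemma cross_edgeE:
  assumes "(B, c) \<in> E" "bus_region B \<noteq> conn_region c"
  obtains (link) q s where "q < length cls" "s < 3" "B = ChB q s (CB 2 PB)" "c = ChC q s (Co 1)"
  | (clause) q s where "q < length cls" "s < 3" "B = ChB q s (CB 4 PB)" "c = ClC q"
  | (literal) q s where "q < length cls" "s < 3" "B = ChB q s (CB 1 PB)"
      "c = VarC (fst (cls ! q ! s)) (Vo (snd (cls ! q ! s)) (occ_num cls q s))"
  using assms(1)
proof (cases rule: nae_bus_edgesE)
  case (chain q s b x)
  from chain(3) show ?thesis
    by (cases rule: chain_edgesE)
      (use that chain assms(2) in \<open>auto simp: chain_part_def chain_conn_part_def\<close>)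
qed (use that assms(2) in auto)

lemma link_edge_clear:
  assumes qs: "q < length cls" "s < 3"
  defines "B \<equiv> ChB q s (CB 2 PB)" and "c \<equiv> ChC q s (Co 1)"
    and "X \<equiv> (column q s + 1, clause_pos q - 45, row q s, row q s)"
  shows "attaches (hor_of B) (rect_of B) (pt_of c)"
    and "edge_rect (hor_of B) (rect_of B) (pt_of c) = tr_rect (lit_true q s) X"
    and "B' \<in> fst ` E \<Longrightarrow> B' \<noteq> B \<Longrightarrow> bus_region B' \<in> {bus_region B, conn_region c} \<Longrightarrow>
      \<not> rects_meet (tr_rect (lit_true q s) X) (rect_of B')"
    and "c' \<in> snd ` E \<Longrightarrow> c' \<noteq> c \<Longrightarrow> conn_region c' \<in> {bus_region B, conn_region c} \<Longrightarrow>
      \<not> in_rect (pt_of c') (tr_rect (lit_true q s) X)"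
proof -
  have "column q s + 100 < clause_pos q" using column_below_top[OF qs] clause_above_top[of q] by simp
  note link = chain_link_edge[OF this, where up = "\<not> repeated q s" and P = "row q s"]
  then have hor: "hor_of B = (False = lit_true q s)" unfolding B_def by simp
  show "attaches (hor_of B) (rect_of B) (pt_of c)"
    unfolding hor unfolding B_def c_def rect_of.simps pt_of.simps tr_invariants using link by simp
  show "edge_rect (hor_of B) (rect_of B) (pt_of c) = tr_rect (lit_true q s) X"
    unfolding hor unfolding B_def c_def rect_of.simps pt_of.simps tr_invariants using link X_def by simp
  show "\<not> rects_meet (tr_rect (lit_true q s) X) (rect_of B')"
    if "B' \<in> fst ` E" "B' \<noteq> B" "bus_region B' \<in> {bus_region B, conn_region c}"
    using that(1)
  proof (cases rule: nae_busE)
    case (chain q' s' b)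
    then show ?thesis using link that unfolding B_def c_def X_def by auto
  qed (use that in \<open>auto simp: B_def c_def\<close>)
  show "\<not> in_rect (pt_of c') (tr_rect (lit_true q s) X)"
    if "c' \<in> snd ` E" "c' \<noteq> c" "conn_region c' \<in> {bus_region B, conn_region c}"
    using that(1)
  proof (cases rule: nae_connE)
    case (chain q' s' x)
    then show ?thesis using link that unfolding B_def c_def X_def by auto
  qed (use that in \<open>auto simp: B_def c_def\<close>)
qed

lemma clause_edge_clear:
  assumes qs: "q < length cls" "s < 3"
  defines "B \<equiv> ChB q s (CB 4 PB)" and "c \<equiv> ClC q"
    and "X \<equiv> if \<not> repeated q s then (clause_pos q, clause_pos q, row q s + 22, clause_pos q)
             else (clause_pos q, clause_pos q, clause_pos q, row q s + 18)"
  shows "attaches (hor_of B) (rect_of B) (pt_of c)"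
    and "edge_rect (hor_of B) (rect_of B) (pt_of c) = tr_rect (lit_true q s) X"
    and "B' \<in> fst ` E \<Longrightarrow> B' \<noteq> B \<Longrightarrow> bus_region B' \<in> {bus_region B, conn_region c} \<Longrightarrow>
      \<not> rects_meet (tr_rect (lit_true q s) X) (rect_of B')"
    and "c' \<in> snd ` E \<Longrightarrow> c' \<noteq> c \<Longrightarrow> conn_region c' \<in> {bus_region B, conn_region c} \<Longrightarrow>
      \<not> in_rect (pt_of c') (tr_rect (lit_true q s) X)"
proof -
  have "\<not> repeated q s \<Longrightarrow> row q s + 30 < clause_pos q" "\<not> \<not> repeated q s \<Longrightarrow> clause_pos q + 30 < row q s"
    using row_side[OF qs(2), of q] by auto
  note out = chain_output_edge[where up = "\<not> repeated q s" and ox = "column q s" and P = "row q s"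
      and Q = "clause_pos q", OF this]
  then have hor: "hor_of B = (True = lit_true q s)" unfolding B_def by simp
  have pt: "pt_of c = tr_pt (lit_true q s) (clause_pos q, clause_pos q)"
    unfolding c_def by (simp add: tr_pt_def)
  show "attaches (hor_of B) (rect_of B) (pt_of c)"
    unfolding hor pt unfolding B_def rect_of.simps tr_invariants using out by simp
  show "edge_rect (hor_of B) (rect_of B) (pt_of c) = tr_rect (lit_true q s) X"
    unfolding hor pt unfolding B_def rect_of.simps tr_invariants using out X_def by simp
  show "\<not> rects_meet (tr_rect (lit_true q s) X) (rect_of B')"
    if "B' \<in> fst ` E" "B' \<noteq> B" "bus_region B' \<in> {bus_region B, conn_region c}"
    using that(1)
  proof (cases rule: nae_busE)
    case (chain q' s' b)
    then have "q' = q" "s' = s" "b \<in> range (CB 2) \<union> range (CB 3) \<union> range (CB 4)" "b \<noteq> CB 4 PB"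
      using that(2,3) by (auto simp: B_def c_def chain_buses_def chain_part_def split: if_splits)
    then show ?thesis using out unfolding chain(4) X_def by auto
  qed (use that in \<open>auto simp: B_def c_def\<close>)
  show "\<not> in_rect (pt_of c') (tr_rect (lit_true q s) X)"
    if "c' \<in> snd ` E" "c' \<noteq> c" "conn_region c' \<in> {bus_region B, conn_region c}"
    using that(1)
  proof (cases rule: nae_connE)
    case (chain q' s' x)
    then have "q' = q" "s' = s" "x \<in> {Co 2, Co 3} \<union> range (CC 2) \<union> range (CC 3) \<union> range (CC 4)"
      using that(3) by (auto simp: B_def c_def chain_conns_def chain_part_def chain_conn_part_def split: if_splits)
    then show ?thesis using out unfolding chain(4) X_def by auto
  qed (use that in \<open>auto simp: B_def c_def\<close>)
qed

lemma literal_edge_clear: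
  assumes qs: "q < length cls" "s < 3"
  defines "B \<equiv> ChB q s (CB 1 PB)"
    and "c \<equiv> VarC (fst (cls ! q ! s)) (Vo (snd (cls ! q ! s)) (occ_num cls q s))"
    and "X \<equiv> (column q s, column q s, snd (occ_pt q s), row q s - 5)"
  shows "attaches (hor_of B) (rect_of B) (pt_of c)"
    and "edge_rect (hor_of B) (rect_of B) (pt_of c) = tr_rect (lit_true q s) X"
    and "B' \<in> fst ` E \<Longrightarrow> B' \<noteq> B \<Longrightarrow> bus_region B' \<in> {bus_region B, conn_region c} \<Longrightarrow>
      \<not> rects_meet (tr_rect (lit_true q s) X) (rect_of B')"
    and "c' \<in> snd ` E \<Longrightarrow> c' \<noteq> c \<Longrightarrow> conn_region c' \<in> {bus_region B, conn_region c} \<Longrightarrow>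
      \<not> in_rect (pt_of c') (tr_rect (lit_true q s) X)"
proof -
  obtain i p where l: "cls ! q ! s = (i, p)" by fastforce
  have i: "i < n" using lit_var_less[OF qs] l by simp
  define C where "C = center i"
  define o_pt where "o_pt = tr_pt p (vbox_pt_of i (Vo p (occ_num cls q s)))"
  have occ: "occ_pt q s = shift_pt C C o_pt" unfolding occ_pt_def l C_def o_pt_def by simp
  have "snd (occ_pt q s) + 10 < row q s"
    using occ_pt_in_square[OF qs] square_below_top[OF i] row_above_top[of q s] l by simp
  note input = chain_input_edge[OF this, where up = "\<not> repeated q s" and ox = "column q s"
      and Q = "clause_pos q"]
  then have hor: "hor_of B = (True = lit_true q s)" unfolding B_def by simp
  have pt: "pt_of c = tr_pt (lit_true q s) (column q s, snd (occ_pt q s))"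
    using pt_of_occ_conn[OF qs] unfolding c_def column_def by simp
  show "attaches (hor_of B) (rect_of B) (pt_of c)"
    unfolding hor pt unfolding B_def rect_of.simps tr_invariants using input by simp
  show "edge_rect (hor_of B) (rect_of B) (pt_of c) = tr_rect (lit_true q s) X"
    unfolding hor pt unfolding B_def rect_of.simps tr_invariants using input X_def by simp
  have r: "1 \<le> occ_num cls q s" "occ_num cls q s \<le> (if p then occ_total cls (i, True) else occ_total cls (i, False))"
    using occ_num_range[OF qs] l by (cases p; simp)+
  have Y: "radius \<le> row q s - 5 - C"
    using square_below_top[OF i] row_above_top[of q s] unfolding C_def by simp
  note corridor = vbox_exit_corridor[OF vbox_fits Y r]
  have X: "X = shift_rect C C (fst o_pt, fst o_pt, snd o_pt, row q s - 5 - C)"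
    unfolding X_def column_def occ by (simp add: shift_rect_def)
  have tr: "(lit_true q s = a i) = p" using tr_lit_true[of q s] unfolding l by simp
  show "\<not> rects_meet (tr_rect (lit_true q s) X) (rect_of B')"
    if "B' \<in> fst ` E" "B' \<noteq> B" "bus_region B' \<in> {bus_region B, conn_region c}"
    using that(1)
  proof (cases rule: nae_busE)
    case (var j b)
    then have "j = i" using that(3) l by (auto simp: B_def c_def chain_part_def)
    have "rects_meet (tr_rect (lit_true q s) X) (rect_of B') \<longleftrightarrow>
        rects_meet X (tr_rect p (shift_rect C C (snd (vbox_bus_of i b))))"
      unfolding var(2) \<open>j = i\<close> rect_of.simps rects_meet_tr_tr tr C_def ..
    also have "\<dots> \<longleftrightarrow> rects_meet (fst o_pt, fst o_pt, snd o_pt, row q s - 5 - C) (tr_rect p (snd (vbox_bus_of i b)))"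
      unfolding X tr_shift_diag shift_invariants ..
    finally show ?thesis using corridor(1) unfolding o_pt_def by blast
  next
    case (chain q' s' b)
    then have "q' = q" "s' = s" "b \<in> range (CB 1)" "b \<noteq> CB 1 PB"
      using that(2,3) l by (auto simp: B_def c_def chain_buses_def chain_part_def split: if_splits)
    then show ?thesis using input unfolding chain(4) X_def by auto
  qed
  show "\<not> in_rect (pt_of c') (tr_rect (lit_true q s) X)"
    if "c' \<in> snd ` E" "c' \<noteq> c" "conn_region c' \<in> {bus_region B, conn_region c}"
    using that(1)
  proof (cases rule: nae_connE)
    case (var j x)
    then have "j = i" "x \<noteq> Vo p (occ_num cls q s)" using that(2,3) l by (auto simp: B_def c_def chain_part_def)
    have "in_rect (pt_of c') (tr_rect (lit_true q s) X) \<longleftrightarrow>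
        in_rect (tr_pt p (shift_pt C C (vbox_pt_of i x))) X"
      unfolding var(3) \<open>j = i\<close> pt_of.simps in_rect_tr_tr eq_commute[of "a i"] tr C_def ..
    also have "\<dots> \<longleftrightarrow> in_rect (tr_pt p (vbox_pt_of i x)) (fst o_pt, fst o_pt, snd o_pt, row q s - 5 - C)"
      unfolding X tr_shift_diag shift_invariants ..
    finally show ?thesis using corridor(2) var(2) \<open>j = i\<close> \<open>x \<noteq> Vo p (occ_num cls q s)\<close>
      unfolding o_pt_def by blast
  next
    case (chain q' s' x)
    then have "q' = q" "s' = s" "x \<in> insert (Co 1) (range (CC 1))"
      using that(3) l by (auto simp: B_def c_def chain_conns_def chain_conn_part_def chain_part_def split: if_splits)
    then show ?thesis using input unfolding chain(4) X_def by auto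
  qed (use that in \<open>auto simp: B_def c_def\<close>)
qed

lemma link_corridor_apart:
  assumes qs: "q < length cls" "s < 3" and r: "r \<in> regions" "r \<notin> {Chain q s 1, Chain q s 2}"
  shows "\<not> rects_meet (tr_rect (lit_true q s) (column q s + 1, clause_pos q - 45, row q s, row q s)) (frame r)"
  using r(1)
proof (cases rule: regionsE)
  case (var j)
  then show ?thesis using square_below_top[OF var(1)] row_above_top[of q s]
    by (cases "lit_true q s") (auto simp: rects_meet_def)
next
  case (chain1 q' s')
  then have "row q s + 100 \<le> row q' s' \<or> row q' s' + 100 \<le> row q s" using rows_apart qs(2) r(2) by blast
  then show ?thesis
    using chain1 column_below_top[OF chain1(1,2)] row_above_top[of q s]
    unfolding chain1(3) chain_frame_eqs rects_meet_tr_tr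
    by (cases "lit_true q s"; cases "lit_true q' s'") (auto simp: rects_meet_def)
next
  case (chain2 q' s')
  then have "row q s + 100 \<le> row q' s' \<or> row q' s' + 100 \<le> row q s" using rows_apart qs(2) r(2) by blast
  then show ?thesis
    using chain2 row_clause_apart[OF qs(2), of q q']
    unfolding chain2(3) chain_frame_eqs rects_meet_tr_tr
    by (cases "lit_true q s"; cases "lit_true q' s'") (auto simp: rects_meet_def)
next
  case (clause q')
  then show ?thesis using row_clause_apart[OF qs(2), of q q']
    by (cases "lit_true q s") (auto simp: rects_meet_def)
qed

lemma clause_corridor_apart:
  assumes qs: "q < length cls" "s < 3" and r: "r \<in> regions" "r \<notin> {Chain q s 2, Clause q}"
  shows "\<not> rects_meet (tr_rect (lit_true q s)
      (if \<not> repeated q s then (clause_pos q, clause_pos q, row q s + 22, clause_pos q)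
       else (clause_pos q, clause_pos q, clause_pos q, row q s + 18))) (frame r)"
  using r(1)
proof (cases rule: regionsE)
  case (var j)
  then show ?thesis using square_below_top[OF var(1)] clause_above_top[of q] row_above_top[of q s]
    by (cases "lit_true q s") (auto simp: rects_meet_def)
next
  case (chain1 q' s')
  then show ?thesis
    using column_below_top[OF chain1(1,2)] row_above_top[of q s] row_above_top[of q' s']
      clause_above_top[of q]
    unfolding chain1(3) chain_frame_eqs rects_meet_tr_tr
    by (cases "lit_true q s"; cases "lit_true q' s'") (auto simp: rects_meet_def)
next
  case (chain2 q' s')
  show ?thesis
  proof (cases "lit_true q' s' = lit_true q s")
    case True
    have "clause_pos q + 100 \<le> clause_pos q' \<or> clause_pos q' + 100 \<le> clause_pos q \<or>
        (q' = q \<and> repeated q s' \<noteq> repeated q s)"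
      using clauses_apart[of q q'] repeated_differs[OF qs(1) chain2(2) qs(2)] True r(2) chain2(3) by auto
    then show ?thesis
      using True row_side[OF qs(2), of q] row_side[OF chain2(2), of q']
      unfolding chain2(3) chain_frame_eqs rects_meet_tr_tr
      by (auto simp: rects_meet_def)
  next
    case False
    then show ?thesis using row_clause_apart[OF chain2(2), of q' q]
      unfolding chain2(3) chain_frame_eqs rects_meet_tr_tr
      by (cases "lit_true q s") (auto simp: rects_meet_def)
  qed
next
  case (clause q')
  then show ?thesis using clauses_apart[of q q'] r(2)
    by (cases "lit_true q s") (auto simp: rects_meet_def)
qed

lemma literal_corridor_apart:
  assumes qs: "q < length cls" "s < 3" and r: "r \<in> regions" "r \<notin> {Chain q s 1, Var (fst (cls ! q ! s))}"
  shows "\<not> rects_meet (tr_rect (lit_true q s) (column q s, column q s, snd (occ_pt q s), row q s - 5)) (frame r)"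
  using r(1)
proof (cases rule: regionsE)
  case (var j)
  then have "j < fst (cls ! q ! s) \<or> fst (cls ! q ! s) < j" using r(2) by auto
  then show ?thesis
    using var squares_apart[of j "fst (cls ! q ! s)"] squares_apart[of "fst (cls ! q ! s)" j]
      occ_pt_in_square[OF qs]
    by (cases "lit_true q s") (auto simp: rects_meet_def)
next
  case (chain1 q' s')
  then have "(q', s') \<noteq> (q, s)" using r(2) by auto
  then show ?thesis
    using chain1 columns_apart[OF qs chain1(1,2)] column_below_top[OF qs] row_above_top[of q' s']
    unfolding chain1(3) chain_frame_eqs rects_meet_tr_tr
    by (cases "lit_true q s"; cases "lit_true q' s'") (auto simp: rects_meet_def)
next
  case (chain2 q' s')
  then show ?thesis
    using column_below_top[OF qs] row_above_top[of q' s'] clause_above_top[of q']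
    unfolding chain2(3) chain_frame_eqs rects_meet_tr_tr
    by (cases "lit_true q s"; cases "lit_true q' s'") (auto simp: rects_meet_def)
next
  case (clause q')
  then show ?thesis using column_below_top[OF qs] clause_above_top[of q']
    by (cases "lit_true q s") (auto simp: rects_meet_def)
qed

lemma nae_grid_layout: "grid_layout (fst ` E) (snd ` E) E hor_of rect_of pt_of"
proof (rule grid_layout_by_regions[where regB = bus_region and regC = conn_region and Rs = regions
      and frame = frame])
  show "E \<subseteq> fst ` E \<times> snd ` E" by (rule subset_fst_snd)
  show "bus_region ` fst ` E \<subseteq> regions" "conn_region ` snd ` E \<subseteq> regions"
    using bus_region_in_regions conn_region_in_regions by blast+
  show "\<not> rects_meet (frame r) (frame r')" if "r \<in> regions" "r' \<in> regions" "r \<noteq> r'" for r r'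
    using frames_disjoint that .
  show "layout_within {B \<in> fst ` E. bus_region B = r} {c \<in> snd ` E. conn_region c = r}
      {(B, c) \<in> E. bus_region B = r \<and> conn_region c = r} hor_of rect_of pt_of (frame r)"
    if "r \<in> regions" for r
    using that
  proof (cases rule: regionsE)
    case (var i)
    then show ?thesis using var_region_layout by blast
  next
    case (chain1 q s)
    then show ?thesis using chain_region_layout[of 1] by blast
  next
    case (chain2 q s)
    then show ?thesis using chain_region_layout[of 2] by blast
  next
    case (clause q)
    then show ?thesis using clause_region_layout by blast
  qed
  fix B c assume e: "(B, c) \<in> E" and cross: "bus_region B \<noteq> conn_region c"
  show "attaches (hor_of B) (rect_of B) (pt_of c)"
    using e cross
  proof (cases rule: cross_edgeE)
    case (link q s) then show ?thesis using link_edge_clear(1) by simp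
  next
    case (clause q s) then show ?thesis using clause_edge_clear(1) by simp
  next
    case (literal q s) then show ?thesis using literal_edge_clear(1) by simp
  qed
  show "\<not> rects_meet (edge_rect (hor_of B) (rect_of B) (pt_of c)) (rect_of B')"
    if "B' \<in> fst ` E" "B' \<noteq> B" "bus_region B' \<in> {bus_region B, conn_region c}" for B'
    using e cross
  proof (cases rule: cross_edgeE)
    case (link q s) then show ?thesis using link_edge_clear(2,3) that by simp
  next
    case (clause q s) then show ?thesis using clause_edge_clear(2,3) that by simp
  next
    case (literal q s) then show ?thesis using literal_edge_clear(2,3) that by simp
  qed
  show "\<not> in_rect (pt_of c') (edge_rect (hor_of B) (rect_of B) (pt_of c))"
    if "c' \<in> snd ` E" "c' \<noteq> c" "conn_region c' \<in> {bus_region B, conn_region c}" for c'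
    using e cross
  proof (cases rule: cross_edgeE)
    case (link q s) then show ?thesis using link_edge_clear(2,4) that by simp
  next
    case (clause q s) then show ?thesis using clause_edge_clear(2,4) that by simp
  next
    case (literal q s) then show ?thesis using literal_edge_clear(2,4) that by simp
  qed
  show "\<not> rects_meet (edge_rect (hor_of B) (rect_of B) (pt_of c)) (frame r)"
    if "r \<in> regions" "r \<notin> {bus_region B, conn_region c}" for r
    using e cross
  proof (cases rule: cross_edgeE)
    case (link q s)
    then show ?thesis
      using link_edge_clear(2) link_corridor_apart that by (simp add: chain_part_def chain_conn_part_def)
  next
    case (clause q s)
    then show ?thesis using clause_edge_clear(2) clause_corridor_apart that by (simp add: chain_part_def)
  next
    case (literal q s)
    then show ?thesis using literal_edge_clear(2) literal_corridor_apart that by (simp add: chain_part_def)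
  qed
qed

end

lemma realizable_if_nae_sat:
  assumes "\<forall>C\<in>set cls. length C = 3 \<and> (\<forall>l\<in>set C. fst l < n)" and "nae_sat cls"
  shows "realizable (fst ` nae_bus_edges n cls) (snd ` nae_bus_edges n cls) (nae_bus_edges n cls)"
proof -
  obtain a where "\<forall>C\<in>set cls. (\<exists>l\<in>set C. lit_val a l) \<and> (\<exists>l\<in>set C. \<not> lit_val a l)"
    using assms(2) unfolding nae_sat_def by blast
  then interpret nae_assignment n cls a using assms(1) by unfold_locales
  show ?thesis
    unfolding realizable_def using bus_realization_if_grid_layout[OF subset_fst_snd nae_grid_layout] by blast
qed

theorem lemma7:
  fixes n :: nat and cls :: "(nat \<times> bool) list list"
  assumes "\<forall>C\<in>set cls. length C = 3 \<and> (\<forall>l\<in>set C. fst l < n)"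
  shows "nae_sat cls \<longleftrightarrow>
    (case nae_bus_graph n cls of (Bs, Cs, E) \<Rightarrow> realizable Bs Cs E)"
proof -
  have graph:
    "nae_bus_graph n cls = (fst ` nae_bus_edges n cls, snd ` nae_bus_edges n cls, nae_bus_edges n cls)"
    unfolding nae_bus_graph_def Let_def ..
  show ?thesis
    unfolding graph prod.case
    using nae_sat_if_realization[OF _ assms] realizable_if_nae_sat[OF assms]
    unfolding realizable_def by blast
qed

end
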